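(* The cartesian product induces an injective ring homomorphism $$\mathrm{B}(\mathbb{Z})\otimes\mathrm{B}(\mathcal{Q})\longrightarrow\mathrm{B}(\mathcal{R}),\qquad [(X,\pi)]\otimes b(Q)\longmapsto b((X,\pi)\times Q),$$ where $(X,\pi)$ is regarded as a permutation rack.
   Context: A rack is a set $R$ with a binary operation $\rhd$ such that every left multiplication $\ell_a\colon b\mapsto a\rhd b$ is a bijection and $a\rhd(b\rhd c)=(a\rhd b)\rhd(a\rhd c)$ for all $a,b,c$; a quandle is a rack with $a\rhd a=a$ for all $a$. A permutation rack $(X,\pi)$ is a set $X$ with permutation $\pi$ and $a\rhd b=\pi(b)$. Products of racks are cartesian products with componentwise operation. A subrack is a subset $S$ with $\ell_s(S)=S$ for all $s\in S$; a decomposition of $R$ into $S$ and $T$ means $S,T$ are disjoint subracks (possibly empty) with $S\cup T=R$. The Burnside ring of finite racks $\mathrm{B}(\mathcal{R})$ is the abelian group generated by symbols $b(R)$, one for each finite rack $R$, subject to $b(R_1)=b(R_2)$ whenever $R_1\cong R_2$ and $b(R)=b(S)+b(T)$ whenever $R$ decomposes into $S$ and $T$, with ring structure $b(R)b(R')=b(R\times R')$; the Burnside ring of finite quandles $\mathrm{B}(\mathcal{Q})$ is defined in the same way using finite quandles. $\mathrm{B}(\mathbb{Z})$ is the Grothendieck ring of isomorphism classes of pairs $(X,\pi)$, $X$ a finite set and $\pi$ a permutation of $X$, with addition from disjoint union and multiplication from cartesian product. *)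

theory Defs
  imports Main "HOL-Library.Nat_Bijection"
begin

text \<open>Finite racks / quandles are represented with carrier a subset of nat
  (every finite rack is isomorphic to one of these); the operation is a function
  on nat whose values outside the carrier are irrelevant (they are identified by
  the isomorphism relations).  Finite Z-sets (X,pi) likewise.\<close>

type_synonym rk = "nat set \<times> (nat \<Rightarrow> nat \<Rightarrow> nat)"
type_synonym zs = "nat set \<times> (nat \<Rightarrow> nat)"

definition is_rack :: "rk \<Rightarrow> bool" where
  "is_rack R \<longleftrightarrow>
     (\<forall>a\<in>fst R. bij_betw (snd R a) (fst R) (fst R)) \<and>
     (\<forall>a\<in>fst R. \<forall>b\<in>fst R. \<forall>c\<in>fst R.
        snd R a (snd R b c) = snd R (snd R a b) (snd R a c))"

definition is_quandle :: "rk \<Rightarrow> bool" where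
  "is_quandle R \<longleftrightarrow> is_rack R \<and> (\<forall>a\<in>fst R. snd R a a = a)"

definition finite_rack :: "rk \<Rightarrow> bool" where
  "finite_rack R \<longleftrightarrow> is_rack R \<and> finite (fst R)"

definition finite_quandle :: "rk \<Rightarrow> bool" where
  "finite_quandle R \<longleftrightarrow> is_quandle R \<and> finite (fst R)"

definition rack_iso :: "rk \<Rightarrow> rk \<Rightarrow> bool" where
  "rack_iso R R' \<longleftrightarrow> (\<exists>f. bij_betw f (fst R) (fst R') \<and>
     (\<forall>a\<in>fst R. \<forall>b\<in>fst R. f (snd R a b) = snd R' (f a) (f b)))"

definition is_subrack :: "nat set \<Rightarrow> rk \<Rightarrow> bool" where
  "is_subrack S R \<longleftrightarrow> S \<subseteq> fst R \<and> (\<forall>s\<in>S. snd R s ` S = S)"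

definition rack_decomp :: "rk \<Rightarrow> nat set \<Rightarrow> nat set \<Rightarrow> bool" where
  "rack_decomp R S T \<longleftrightarrow> is_subrack S R \<and> is_subrack T R \<and> S \<inter> T = {} \<and> S \<union> T = fst R"

definition is_zset :: "zs \<Rightarrow> bool" where
  "is_zset X \<longleftrightarrow> finite (fst X) \<and> bij_betw (snd X) (fst X) (fst X)"

definition zset_iso :: "zs \<Rightarrow> zs \<Rightarrow> bool" where
  "zset_iso X Y \<longleftrightarrow> (\<exists>f. bij_betw f (fst X) (fst Y) \<and>
     (\<forall>a\<in>fst X. f (snd X a) = snd Y (f a)))"

definition zset_decomp :: "zs \<Rightarrow> nat set \<Rightarrow> nat set \<Rightarrow> bool" where
  "zset_decomp X S T \<longleftrightarrow> snd X ` S = S \<and> snd X ` T = T \<and> S \<inter> T = {} \<and> S \<union> T = fst X"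

text \<open>Formal Z-linear combinations (finitely supported functions to int).\<close>

definition gen :: "'a \<Rightarrow> 'a \<Rightarrow> int" where
  "gen x = (\<lambda>y. if y = x then 1 else 0)"

definition FS :: "'a set \<Rightarrow> ('a \<Rightarrow> int) set" where
  "FS G = {c. finite {x. c x \<noteq> 0} \<and> (\<forall>x. c x \<noteq> 0 \<longrightarrow> x \<in> G)}"

inductive_set zspan :: "('a \<Rightarrow> int) set \<Rightarrow> ('a \<Rightarrow> int) set" for R where
  zero: "(\<lambda>_. 0) \<in> zspan R"
| step: "r \<in> R \<Longrightarrow> c \<in> zspan R \<Longrightarrow> (\<lambda>x. c x + k * r x) \<in> zspan R"

definition linext :: "('a \<Rightarrow> 'b) \<Rightarrow> ('a \<Rightarrow> int) \<Rightarrow> 'b \<Rightarrow> int" where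
  "linext \<phi> c = (\<lambda>y. \<Sum>x | c x \<noteq> 0 \<and> \<phi> x = y. c x)"

definition conv :: "('a \<Rightarrow> 'a \<Rightarrow> 'a) \<Rightarrow> ('a \<Rightarrow> int) \<Rightarrow> ('a \<Rightarrow> int) \<Rightarrow> 'a \<Rightarrow> int" where
  "conv m f g = linext (\<lambda>(a, b). m a b) (\<lambda>(a, b). f a * g b)"

text \<open>Defining relations of B(R), B(Q), B(Z).\<close>

definition rack_rels :: "(rk \<Rightarrow> int) set" where
  "rack_rels =
     {(\<lambda>x. gen R1 x - gen R2 x) | R1 R2. finite_rack R1 \<and> finite_rack R2 \<and> rack_iso R1 R2}
   \<union> {(\<lambda>x. gen R x - gen (S, snd R) x - gen (T, snd R) x) | R S T.
        finite_rack R \<and> rack_decomp R S T}"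

definition quandle_rels :: "(rk \<Rightarrow> int) set" where
  "quandle_rels =
     {(\<lambda>x. gen R1 x - gen R2 x) | R1 R2. finite_quandle R1 \<and> finite_quandle R2 \<and> rack_iso R1 R2}
   \<union> {(\<lambda>x. gen R x - gen (S, snd R) x - gen (T, snd R) x) | R S T.
        finite_quandle R \<and> rack_decomp R S T}"

definition zset_rels :: "(zs \<Rightarrow> int) set" where
  "zset_rels =
     {(\<lambda>x. gen X1 x - gen X2 x) | X1 X2. is_zset X1 \<and> is_zset X2 \<and> zset_iso X1 X2}
   \<union> {(\<lambda>x. gen X x - gen (S, snd X) x - gen (T, snd X) x) | X S T.
        is_zset X \<and> zset_decomp X S T}"

text \<open>Tensor product B(Z) \<otimes> B(Q) of the presented groups: free on pairs of
  generators modulo relation \<otimes> generator and generator \<otimes> relation.\<close>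

definition tensor_rels :: "(zs \<times> rk \<Rightarrow> int) set" where
  "tensor_rels =
     {(\<lambda>(X, Q). if Q = Q0 then r X else 0) | r Q0. r \<in> zset_rels \<and> finite_quandle Q0}
   \<union> {(\<lambda>(X, Q). if X = X0 then s Q else 0) | X0 s. is_zset X0 \<and> s \<in> quandle_rels}"

definition tensor_gens :: "(zs \<times> rk) set" where
  "tensor_gens = {(X, Q). is_zset X \<and> finite_quandle Q}"

definition rack_prod :: "rk \<Rightarrow> rk \<Rightarrow> rk" where
  "rack_prod R R' =
     ({prod_encode (a, b) | a b. a \<in> fst R \<and> b \<in> fst R'},
      \<lambda>u v. prod_encode (snd R (fst (prod_decode u)) (fst (prod_decode v)),
                          snd R' (snd (prod_decode u)) (snd (prod_decode v))))"

definition zset_prod :: "zs \<Rightarrow> zs \<Rightarrow> zs" where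
  "zset_prod X Y =
     ({prod_encode (a, b) | a b. a \<in> fst X \<and> b \<in> fst Y},
      \<lambda>u. prod_encode (snd X (fst (prod_decode u)), snd Y (snd (prod_decode u))))"

definition perm_rack :: "zs \<Rightarrow> rk" where
  "perm_rack X = (fst X, \<lambda>a b. snd X b)"

definition rack_one :: rk where "rack_one = ({0}, \<lambda>_ _. 0)"
definition zset_one :: zs where "zset_one = ({0}, \<lambda>_. 0)"

definition tensor_mult :: "zs \<times> rk \<Rightarrow> zs \<times> rk \<Rightarrow> zs \<times> rk" where
  "tensor_mult p q = (zset_prod (fst p) (fst q), rack_prod (snd p) (snd q))"

definition burnside_map :: "(zs \<times> rk \<Rightarrow> int) \<Rightarrow> rk \<Rightarrow> int" where
  "burnside_map = linext (\<lambda>(X, Q). rack_prod (perm_rack X) Q)"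

end

(* Products with permutation racks respect the defining relations: an isomorphism or a
   decomposition of (X,pi) or of Q induces one of (X,pi) x Q, and interchanging the middle
   factors identifies (X x Y) x (Q x Q') with (X x Q) x (Y x Q'), which gives multiplicativity.

   For injectivity, splitting non-transitive Z-sets and disconnected quandles shows that every
   generator [X] (x) b(Q) is congruent, modulo the relations, to a sum of generators with X a single
   cycle and Q connected.  For such pairs (X,pi) x Q is a connected rack which determines X and Q:
   since Q is a quandle, (x,q) |> (x,q) = (pi x, q), so an isomorphism acts on the Q-coordinate
   independently of the X-coordinate.  Counting the subracks isomorphic to a fixed connected rack K
   is additive on decompositions, hence a homomorphism B(R) -> Z.  Taking K of maximal size among
   the products occurring in an element of the kernel shows that the coefficients of the pairs
   with product isomorphic to K sum to zero; these pairs are all equivalent, so they cancel, and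
   induction on the support finishes the proof. *)

theory Submission
  imports Defs
begin

definition supp :: "('a \<Rightarrow> int) \<Rightarrow> 'a set" where
  "supp f = {x. f x \<noteq> 0}"

definition finsupp :: "('a \<Rightarrow> int) \<Rightarrow> bool" where
  "finsupp f \<longleftrightarrow> finite (supp f)"

lemma FS_iff: "c \<in> FS G \<longleftrightarrow> finsupp c \<and> supp c \<subseteq> G"
  by (auto simp: FS_def finsupp_def supp_def)

lemma supp_gen [simp]: "supp (gen a) = {a}"
  by (auto simp: supp_def gen_def)

lemma finsupp_zero [simp]: "finsupp (\<lambda>_. 0)"
  by (simp add: finsupp_def supp_def)

lemma finsupp_gen [simp]: "finsupp (gen a)"
  by (simp add: finsupp_def)

lemma finsupp_add [simp]: "finsupp f \<Longrightarrow> finsupp g \<Longrightarrow> finsupp (\<lambda>x. f x + g x)"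
  unfolding finsupp_def by (rule finite_subset[of _ "supp f \<union> supp g"]) (auto simp: supp_def)

lemma finsupp_diff [simp]: "finsupp f \<Longrightarrow> finsupp g \<Longrightarrow> finsupp (\<lambda>x. f x - g x)"
  unfolding finsupp_def by (rule finite_subset[of _ "supp f \<union> supp g"]) (auto simp: supp_def)

lemma finsupp_smult [simp]: "finsupp f \<Longrightarrow> finsupp (\<lambda>x. k * f x)"
  unfolding finsupp_def by (rule finite_subset[of _ "supp f"]) (auto simp: supp_def)

lemma supp_tensor: "supp (\<lambda>(x, y). f x * g y) = supp f \<times> supp g"
  by (auto simp: supp_def)

lemma finsupp_tensor: "finsupp f \<Longrightarrow> finsupp g \<Longrightarrow> finsupp (\<lambda>(x, y). f x * g y)"
  by (simp add: finsupp_def supp_tensor)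

lemma sum_times_gen: "finite A \<Longrightarrow> (\<Sum>x\<in>A. f x * gen x y) = (if y \<in> A then f y else 0)"
  by (simp add: gen_def if_distrib[where f = "\<lambda>z. _ * z"] cong: if_cong)

lemma finsupp_as_sum: "finsupp f \<Longrightarrow> f y = (\<Sum>x\<in>supp f. f x * gen x y)"
  by (simp add: sum_times_gen finsupp_def supp_def)

definition weighted_sum :: "('a \<Rightarrow> int) \<Rightarrow> ('a \<Rightarrow> int) \<Rightarrow> int" where
  "weighted_sum w f = (\<Sum>x\<in>supp f. f x * w x)"

lemma weighted_sum_superset:
  "finite A \<Longrightarrow> supp f \<subseteq> A \<Longrightarrow> weighted_sum w f = (\<Sum>x\<in>A. f x * w x)"
  unfolding weighted_sum_def by (rule sum.mono_neutral_left) (auto simp: supp_def)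

lemma weighted_sum_add:
  assumes "finsupp f" "finsupp g"
  shows "weighted_sum w (\<lambda>x. f x + g x) = weighted_sum w f + weighted_sum w g"
proof -
  let ?A = "supp f \<union> supp g"
  have "finite ?A" using assms by (simp add: finsupp_def)
  then show ?thesis
    by (subst (1 2 3) weighted_sum_superset[of ?A]) (auto simp: supp_def sum.distrib distrib_right)
qed

lemma weighted_sum_smult: "finsupp f \<Longrightarrow> weighted_sum w (\<lambda>x. k * f x) = k * weighted_sum w f"
  by (subst (1 2) weighted_sum_superset[of "supp f"])
     (auto simp: finsupp_def supp_def sum_distrib_left mult.assoc)

lemma weighted_sum_diff:
  assumes "finsupp f" "finsupp g"
  shows "weighted_sum w (\<lambda>x. f x - g x) = weighted_sum w f - weighted_sum w g"
  using weighted_sum_add[OF assms(1) finsupp_smult[OF assms(2)], of w "-1"]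
    weighted_sum_smult[OF assms(2), of w "-1"] by simp

lemma weighted_sum_gen [simp]: "weighted_sum w (gen a) = w a"
  unfolding weighted_sum_def supp_gen by (simp add: gen_def)

lemma supp_linext: "supp (linext \<phi> f) \<subseteq> \<phi> ` supp f"
proof
  fix y assume "y \<in> supp (linext \<phi> f)"
  then have "(\<Sum>x | f x \<noteq> 0 \<and> \<phi> x = y. f x) \<noteq> 0" by (simp add: supp_def linext_def)
  then obtain x where "f x \<noteq> 0" "\<phi> x = y" by (auto elim: sum.not_neutral_contains_not_neutral)
  then show "y \<in> \<phi> ` supp f" by (auto simp: supp_def)
qed

lemma finsupp_linext: "finsupp f \<Longrightarrow> finsupp (linext \<phi> f)"
  unfolding finsupp_def by (rule finite_subset[OF supp_linext]) simp

lemma linext_as_sum: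
  assumes "finite A" "supp f \<subseteq> A"
  shows "linext \<phi> f y = (\<Sum>x\<in>A. f x * gen (\<phi> x) y)"
proof -
  have "linext \<phi> f y = (\<Sum>x\<in>A \<inter> {x. \<phi> x = y}. f x)"
    unfolding linext_def using assms by (intro sum.mono_neutral_left) (auto simp: supp_def)
  also have "\<dots> = (\<Sum>x\<in>A. f x * gen (\<phi> x) y)"
    unfolding sum.inter_restrict[OF assms(1)] by (intro sum.cong) (auto simp: gen_def)
  finally show ?thesis .
qed

lemma linext_as_weighted_sum: "finsupp f \<Longrightarrow> linext \<phi> f y = weighted_sum (\<lambda>x. gen (\<phi> x) y) f"
  by (simp add: linext_as_sum[of "supp f"] weighted_sum_def finsupp_def)

lemma linext_add:
  "finsupp f \<Longrightarrow> finsupp g \<Longrightarrow> linext \<phi> (\<lambda>x. f x + g x) = (\<lambda>y. linext \<phi> f y + linext \<phi> g y)"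
  by (simp add: fun_eq_iff linext_as_weighted_sum weighted_sum_add)

lemma linext_smult: "finsupp f \<Longrightarrow> linext \<phi> (\<lambda>x. k * f x) = (\<lambda>y. k * linext \<phi> f y)"
  by (simp add: fun_eq_iff linext_as_weighted_sum weighted_sum_smult)

lemma linext_diff:
  "finsupp f \<Longrightarrow> finsupp g \<Longrightarrow> linext \<phi> (\<lambda>x. f x - g x) = (\<lambda>y. linext \<phi> f y - linext \<phi> g y)"
  by (simp add: fun_eq_iff linext_as_weighted_sum weighted_sum_diff)

lemma linext_gen [simp]: "linext \<phi> (gen a) = gen (\<phi> a)"
  by (simp add: linext_as_weighted_sum fun_eq_iff)

lemma linext_zero [simp]: "linext \<phi> (\<lambda>_. 0) = (\<lambda>_. 0)"
  by (simp add: linext_def)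

lemma linext_gen_diff: "linext \<phi> (\<lambda>x. gen a x - gen b x) = (\<lambda>y. gen (\<phi> a) y - gen (\<phi> b) y)"
  by (simp add: linext_diff)

lemma linext_gen_diff3:
  "linext \<phi> (\<lambda>x. gen a x - gen b x - gen c x) = (\<lambda>y. gen (\<phi> a) y - gen (\<phi> b) y - gen (\<phi> c) y)"
  by (simp add: linext_diff linext_gen_diff)

lemma linext_id: "linext (\<lambda>x. x) f = f"
proof
  fix y
  have "{x. f x \<noteq> 0 \<and> x = y} = (if f y = 0 then {} else {y})" by auto
  then show "linext (\<lambda>x. x) f y = f y" by (simp add: linext_def)
qed

lemma linext_const: "linext (\<lambda>_. t) f = (\<lambda>y. (\<Sum>x\<in>supp f. f x) * gen t y)"
  by (auto simp: linext_def supp_def gen_def fun_eq_iff)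

lemma weighted_sum_linext:
  assumes "finsupp f"
  shows "weighted_sum w (linext \<phi> f) = weighted_sum (\<lambda>x. w (\<phi> x)) f"
proof -
  have fin: "finite (supp f)" "finite (\<phi> ` supp f)" using assms by (simp_all add: finsupp_def)
  have "weighted_sum w (linext \<phi> f) = (\<Sum>y\<in>\<phi> ` supp f. linext \<phi> f y * w y)"
    by (rule weighted_sum_superset[OF fin(2) supp_linext])
  also have "\<dots> = (\<Sum>y\<in>\<phi> ` supp f. \<Sum>x\<in>{x \<in> supp f. \<phi> x = y}. f x * w (\<phi> x))"
    by (intro sum.cong refl) (simp add: linext_def supp_def sum_distrib_right)
  also have "\<dots> = (\<Sum>x\<in>supp f. f x * w (\<phi> x))"
    by (rule sum.group[OF fin subset_refl])
  finally show ?thesis by (simp add: weighted_sum_def)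
qed

lemma linext_linext: "finsupp f \<Longrightarrow> linext \<psi> (linext \<phi> f) = linext (\<lambda>x. \<psi> (\<phi> x)) f"
  by (simp add: fun_eq_iff linext_as_weighted_sum finsupp_linext weighted_sum_linext)

lemma linext_tensor:
  "(\<lambda>(a, b). linext \<phi> f a * linext \<psi> g b) = linext (map_prod \<phi> \<psi>) (\<lambda>(x, y). f x * g y)"
proof (intro ext, clarify)
  fix a b
  let ?A = "{x. f x \<noteq> 0 \<and> \<phi> x = a}" and ?B = "{y. g y \<noteq> 0 \<and> \<psi> y = b}"
  have "{p. (case p of (x, y) \<Rightarrow> f x * g y) \<noteq> 0 \<and> map_prod \<phi> \<psi> p = (a, b)} = ?A \<times> ?B" by auto
  then show "linext \<phi> f a * linext \<psi> g b = linext (map_prod \<phi> \<psi>) (\<lambda>(x, y). f x * g y) (a, b)"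
    by (simp add: linext_def sum_product sum.cartesian_product)
qed

lemma conv_linext:
  assumes "finsupp f" "finsupp g"
  shows "conv m (linext \<phi> f) (linext \<psi> g) = linext (\<lambda>(x, y). m (\<phi> x) (\<psi> y)) (\<lambda>(x, y). f x * g y)"
proof -
  have "(\<lambda>p. case_prod m (map_prod \<phi> \<psi> p)) = (\<lambda>(x, y). m (\<phi> x) (\<psi> y))"
    by (simp add: fun_eq_iff)
  then show ?thesis
    unfolding conv_def linext_tensor by (simp add: linext_linext finsupp_tensor[OF assms])
qed

lemma zspan_add: "b \<in> zspan R \<Longrightarrow> a \<in> zspan R \<Longrightarrow> (\<lambda>x. a x + b x) \<in> zspan R"
proof (induction b rule: zspan.induct)
  case (step r c k)
  have "(\<lambda>x. (a x + c x) + k * r x) \<in> zspan R"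
    by (rule zspan.step[OF step.hyps(1) step.IH[OF step.prems]])
  then show ?case by (simp add: add.assoc)
qed simp

lemma zspan_smult: "a \<in> zspan R \<Longrightarrow> (\<lambda>x. k * a x) \<in> zspan R"
proof (induction a rule: zspan.induct)
  case (step r c j)
  have "(\<lambda>x. k * c x + (k * j) * r x) \<in> zspan R" by (rule zspan.step[OF step.hyps(1) step.IH])
  then show ?case by (simp add: algebra_simps)
qed (simp add: zspan.zero)

lemma zspan_base: "r \<in> R \<Longrightarrow> r \<in> zspan R"
  using zspan.step[OF _ zspan.zero, of r R 1] by simp

lemma zspan_diff: "a \<in> zspan R \<Longrightarrow> b \<in> zspan R \<Longrightarrow> (\<lambda>x. a x - b x) \<in> zspan R"
  using zspan_add[OF zspan_smult[of b R "-1"], of a] by simp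

lemma zspan_sum:
  "finite A \<Longrightarrow> (\<And>i. i \<in> A \<Longrightarrow> f i \<in> zspan R) \<Longrightarrow> (\<lambda>x. \<Sum>i\<in>A. f i x) \<in> zspan R"
proof (induction A rule: finite_induct)
  case (insert a A)
  then show ?case using zspan_add[of "\<lambda>x. \<Sum>i\<in>A. f i x" R "f a"] by simp
qed (simp add: zspan.zero)

lemma finsupp_zspan: "c \<in> zspan R \<Longrightarrow> (\<And>r. r \<in> R \<Longrightarrow> finsupp r) \<Longrightarrow> finsupp c"
  by (induction c rule: zspan.induct) auto

lemma weighted_sum_zspan:
  assumes "c \<in> zspan R" and "\<And>r. r \<in> R \<Longrightarrow> finsupp r \<and> weighted_sum w r = 0"
  shows "weighted_sum w c = 0"
  using assms(1)
proof (induction c rule: zspan.induct)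
  case (step r c k)
  have "finsupp c" using finsupp_zspan[OF step.hyps(2)] assms(2) by blast
  with step assms(2)[OF step.hyps(1)] show ?case
    by (simp add: weighted_sum_add weighted_sum_smult)
qed (simp add: weighted_sum_def supp_def)

lemma linext_zspan:
  assumes "c \<in> zspan R" and "\<And>r. r \<in> R \<Longrightarrow> finsupp r \<and> linext \<phi> r \<in> zspan R'"
  shows "linext \<phi> c \<in> zspan R'"
  using assms(1)
proof (induction c rule: zspan.induct)
  case (step r c k)
  have "finsupp c" using finsupp_zspan[OF step.hyps(2)] assms(2) by blast
  with step assms(2)[OF step.hyps(1)] show ?case
    by (simp add: linext_add linext_smult zspan_add zspan_smult)
qed (simp add: zspan.zero)

lemma linext_diff_in_zspan:
  assumes "finsupp h" and "\<And>x. x \<in> supp h \<Longrightarrow> (\<lambda>y. gen (\<phi> x) y - gen (\<psi> x) y) \<in> zspan R"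
  shows "(\<lambda>y. linext \<phi> h y - linext \<psi> h y) \<in> zspan R"
proof -
  have fin: "finite (supp h)" using assms(1) by (simp add: finsupp_def)
  have "(\<lambda>y. linext \<phi> h y - linext \<psi> h y)
      = (\<lambda>y. \<Sum>x\<in>supp h. h x * (gen (\<phi> x) y - gen (\<psi> x) y))"
    by (simp add: linext_as_sum[OF fin] sum_subtractf right_diff_distrib)
  also have "\<dots> \<in> zspan R"
    using fin by (rule zspan_sum) (rule zspan_smult[OF assms(2)])
  finally show ?thesis .
qed

subsection \<open>Racks, Z-sets and their products\<close>

lemma rack_closed: "is_rack R \<Longrightarrow> a \<in> fst R \<Longrightarrow> b \<in> fst R \<Longrightarrow> snd R a b \<in> fst R"
  unfolding is_rack_def bij_betw_def by blast

lemma zset_closed: "is_zset X \<Longrightarrow> x \<in> fst X \<Longrightarrow> snd X x \<in> fst X"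
  unfolding is_zset_def bij_betw_def by blast

lemma zset_surj: "is_zset X \<Longrightarrow> x \<in> fst X \<Longrightarrow> \<exists>y\<in>fst X. x = snd X y"
  unfolding is_zset_def bij_betw_def by blast

lemma finite_quandle_imp_finite_rack: "finite_quandle Q \<Longrightarrow> finite_rack Q"
  by (simp add: finite_quandle_def finite_rack_def is_quandle_def)

lemma carrier_subrack: "is_rack R \<Longrightarrow> is_subrack (fst R) R"
  by (auto simp: is_subrack_def is_rack_def bij_betw_def)

lemma rack_iso_refl: "rack_iso R R"
  unfolding rack_iso_def by (rule exI[of _ id]) auto

lemma rack_iso_sym:
  assumes R: "is_rack R" and iso: "rack_iso R R'"
  shows "rack_iso R' R"
proof -
  obtain f where f: "bij_betw f (fst R) (fst R')"
    and hom: "\<forall>a\<in>fst R. \<forall>b\<in>fst R. f (snd R a b) = snd R' (f a) (f b)"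
    using iso unfolding rack_iso_def by blast
  let ?g = "inv_into (fst R) f"
  have g: "bij_betw ?g (fst R') (fst R)" by (rule bij_betw_inv_into[OF f])
  have "?g (snd R' a b) = snd R (?g a) (?g b)" if "a \<in> fst R'" "b \<in> fst R'" for a b
  proof -
    have ga: "?g a \<in> fst R" "?g b \<in> fst R" using g that by (auto simp: bij_betw_def)
    have "f (?g a) = a" "f (?g b) = b" using f that by (auto simp: bij_betw_def f_inv_into_f)
    then have "snd R' a b = f (snd R (?g a) (?g b))" using hom ga by metis
    then show ?thesis using rack_closed[OF R ga] f by (simp add: bij_betw_def)
  qed
  then show ?thesis unfolding rack_iso_def using g by blast
qed

lemma perm_rack_carrier [simp]: "fst (perm_rack X) = fst X"
  by (simp add: perm_rack_def)

lemma perm_rack_op [simp]: "snd (perm_rack X) a b = snd X b"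
  by (simp add: perm_rack_def)

lemma perm_rack_rack: "is_zset X \<Longrightarrow> is_rack (perm_rack X)"
  by (simp add: is_rack_def is_zset_def perm_rack_def)

lemma finite_rack_perm_rack: "is_zset X \<Longrightarrow> finite_rack (perm_rack X)"
  using perm_rack_rack[of X] by (simp add: finite_rack_def is_zset_def)

lemma zset_iso_refl: "zset_iso X X"
  unfolding zset_iso_def by (rule exI[of _ id]) auto

lemma perm_rack_iso: "zset_iso X Y \<Longrightarrow> rack_iso (perm_rack X) (perm_rack Y)"
  unfolding zset_iso_def rack_iso_def perm_rack_def by auto

lemma perm_rack_restrict: "perm_rack (S, snd X) = (S, snd (perm_rack X))"
  by (simp add: perm_rack_def)

lemma zset_decomp_perm_rack: "zset_decomp X S T \<Longrightarrow> rack_decomp (perm_rack X) S T"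
  by (auto simp: zset_decomp_def rack_decomp_def is_subrack_def perm_rack_def)

lemma bij_betw_encoded:
  assumes "bij_betw h (A \<times> B) (C \<times> D)"
  shows "bij_betw (\<lambda>u. prod_encode (h (prod_decode u)))
    (prod_encode ` (A \<times> B)) (prod_encode ` (C \<times> D))"
proof -
  have "bij_betw prod_decode (prod_encode ` (A \<times> B)) (A \<times> B)"
    by (rule bij_betw_byWitness[where f' = prod_encode]) (auto simp: prod_encode_inverse)
  moreover have "bij_betw prod_encode (C \<times> D) (prod_encode ` (C \<times> D))"
    by (rule inj_on_imp_bij_betw[OF inj_prod_encode])
  ultimately have "bij_betw (prod_encode \<circ> (h \<circ> prod_decode))
      (prod_encode ` (A \<times> B)) (prod_encode ` (C \<times> D))"
    using assms by (blast intro: bij_betw_trans)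
  then show ?thesis by (simp add: comp_def)
qed

lemma bij_betw_decoded:
  assumes "bij_betw F (prod_encode ` (A \<times> B)) (prod_encode ` (C \<times> D))"
  shows "bij_betw (\<lambda>p. prod_decode (F (prod_encode p))) (A \<times> B) (C \<times> D)"
proof -
  have "bij_betw prod_encode (A \<times> B) (prod_encode ` (A \<times> B))"
    by (rule inj_on_imp_bij_betw[OF inj_prod_encode])
  moreover have "bij_betw prod_decode (prod_encode ` (C \<times> D)) (C \<times> D)"
    by (rule bij_betw_byWitness[where f' = prod_encode]) (auto simp: prod_encode_inverse)
  ultimately have "bij_betw (prod_decode \<circ> (F \<circ> prod_encode)) (A \<times> B) (C \<times> D)"
    using assms by (blast intro: bij_betw_trans)
  then show ?thesis by (simp add: comp_def)
qed

lemma image_encoded: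
  "(\<lambda>u. prod_encode (h (prod_decode u))) ` prod_encode ` A = prod_encode ` h ` A"
  by (simp add: image_image prod_encode_inverse)

lemma rack_prod_carrier: "fst (rack_prod R R') = prod_encode ` (fst R \<times> fst R')"
  by (auto simp: rack_prod_def)

lemma rack_prod_op [simp]:
  "snd (rack_prod R R') (prod_encode (a, b)) (prod_encode (c, d))
    = prod_encode (snd R a c, snd R' b d)"
  by (simp add: rack_prod_def prod_encode_inverse)

lemma rack_prod_lmult:
  "snd (rack_prod R R') (prod_encode (a, b))
     = (\<lambda>u. prod_encode (map_prod (snd R a) (snd R' b) (prod_decode u)))"
  by (simp add: rack_prod_def prod_encode_inverse map_prod_def split_beta)

lemma rack_prod_restrict_left:
  "rack_prod (S, snd R) R' = (prod_encode ` (S \<times> fst R'), snd (rack_prod R R'))"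
  by (auto simp: rack_prod_def)

lemma rack_prod_restrict_right:
  "rack_prod R (S, snd R') = (prod_encode ` (fst R \<times> S), snd (rack_prod R R'))"
  by (auto simp: rack_prod_def)

lemma zset_prod_carrier: "fst (zset_prod X Y) = prod_encode ` (fst X \<times> fst Y)"
  by (auto simp: zset_prod_def)

lemma zset_prod_perm:
  "snd (zset_prod X Y) = (\<lambda>u. prod_encode (map_prod (snd X) (snd Y) (prod_decode u)))"
  by (simp add: zset_prod_def map_prod_def split_beta)

lemma zset_prod_perm_encode [simp]:
  "snd (zset_prod X Y) (prod_encode (a, b)) = prod_encode (snd X a, snd Y b)"
  by (simp add: zset_prod_def prod_encode_inverse)

lemma rack_prod_rack:
  assumes "is_rack R" "is_rack R'"
  shows "is_rack (rack_prod R R')"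
  unfolding is_rack_def rack_prod_carrier
proof (intro conjI ballI)
  fix u assume "u \<in> prod_encode ` (fst R \<times> fst R')"
  then obtain a b where u: "u = prod_encode (a, b)" "a \<in> fst R" "b \<in> fst R'" by auto
  have "bij_betw (map_prod (snd R a) (snd R' b)) (fst R \<times> fst R') (fst R \<times> fst R')"
    using assms u by (intro bij_betw_map_prod) (auto simp: is_rack_def)
  then show "bij_betw (snd (rack_prod R R') u)
      (prod_encode ` (fst R \<times> fst R')) (prod_encode ` (fst R \<times> fst R'))"
    unfolding u(1) rack_prod_lmult by (rule bij_betw_encoded)
next
  fix u v w assume "u \<in> prod_encode ` (fst R \<times> fst R')" "v \<in> prod_encode ` (fst R \<times> fst R')"
    "w \<in> prod_encode ` (fst R \<times> fst R')"
  then show "snd (rack_prod R R') u (snd (rack_prod R R') v w) =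
      snd (rack_prod R R') (snd (rack_prod R R') u v) (snd (rack_prod R R') u w)"
    using assms by (auto simp: is_rack_def)
qed

lemma finite_rack_prod: "finite_rack R \<Longrightarrow> finite_rack R' \<Longrightarrow> finite_rack (rack_prod R R')"
  by (simp add: finite_rack_def rack_prod_rack rack_prod_carrier)

lemma card_rack_prod:
  "finite (fst R) \<Longrightarrow> finite (fst R') \<Longrightarrow> card (fst (rack_prod R R')) = card (fst R) * card (fst R')"
  by (simp add: rack_prod_carrier card_image inj_on_def card_cartesian_product prod_encode_eq)

lemma zset_prod_zset: "is_zset X \<Longrightarrow> is_zset Y \<Longrightarrow> is_zset (zset_prod X Y)"
  unfolding is_zset_def zset_prod_carrier zset_prod_perm
  by (simp add: bij_betw_encoded bij_betw_map_prod)

lemma rack_prod_iso: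
  assumes "rack_iso R1 R2" "rack_iso R1' R2'"
  shows "rack_iso (rack_prod R1 R1') (rack_prod R2 R2')"
proof -
  obtain f where f: "bij_betw f (fst R1) (fst R2)"
    and hf: "\<forall>a\<in>fst R1. \<forall>b\<in>fst R1. f (snd R1 a b) = snd R2 (f a) (f b)"
    using assms(1) unfolding rack_iso_def by blast
  obtain g where g: "bij_betw g (fst R1') (fst R2')"
    and hg: "\<forall>a\<in>fst R1'. \<forall>b\<in>fst R1'. g (snd R1' a b) = snd R2' (g a) (g b)"
    using assms(2) unfolding rack_iso_def by blast
  let ?F = "\<lambda>u. prod_encode (map_prod f g (prod_decode u))"
  have "bij_betw ?F (fst (rack_prod R1 R1')) (fst (rack_prod R2 R2'))"
    unfolding rack_prod_carrier by (intro bij_betw_encoded bij_betw_map_prod f g)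
  moreover have "\<forall>u\<in>fst (rack_prod R1 R1'). \<forall>v\<in>fst (rack_prod R1 R1').
      ?F (snd (rack_prod R1 R1') u v) = snd (rack_prod R2 R2') (?F u) (?F v)"
    unfolding rack_prod_carrier using hf hg by (auto simp: prod_encode_inverse)
  ultimately show ?thesis unfolding rack_iso_def by blast
qed

lemma subrack_prod:
  assumes "is_subrack U R" "is_subrack V R'"
  shows "is_subrack (prod_encode ` (U \<times> V)) (rack_prod R R')"
  unfolding is_subrack_def rack_prod_carrier
proof (intro conjI ballI)
  show "prod_encode ` (U \<times> V) \<subseteq> prod_encode ` (fst R \<times> fst R')"
    using assms by (auto simp: is_subrack_def)
  fix s assume "s \<in> prod_encode ` (U \<times> V)"
  then obtain a b where s: "s = prod_encode (a, b)" "a \<in> U" "b \<in> V" by auto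
  have "snd R a ` U = U" "snd R' b ` V = V" using assms s by (auto simp: is_subrack_def)
  then show "snd (rack_prod R R') s ` prod_encode ` (U \<times> V) = prod_encode ` (U \<times> V)"
    unfolding s(1) rack_prod_lmult image_encoded by (simp add: map_prod_surj_on)
qed

lemma rack_decomp_prod_left:
  assumes "rack_decomp R S T" "is_subrack (fst R') R'"
  shows "rack_decomp (rack_prod R R') (prod_encode ` (S \<times> fst R')) (prod_encode ` (T \<times> fst R'))"
  using assms unfolding rack_decomp_def
  by (auto simp: subrack_prod rack_prod_carrier prod_encode_eq
      simp flip: image_Un Sigma_Un_distrib1)

lemma rack_decomp_prod_right:
  assumes "is_subrack (fst R) R" "rack_decomp R' S T"
  shows "rack_decomp (rack_prod R R') (prod_encode ` (fst R \<times> S)) (prod_encode ` (fst R \<times> T))"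
  using assms unfolding rack_decomp_def
  by (auto simp: subrack_prod rack_prod_carrier prod_encode_eq
      simp flip: image_Un Sigma_Un_distrib2)

lemma rack_prod_interchange_iso:
  "rack_iso (rack_prod (perm_rack (zset_prod X Y)) (rack_prod Q Q'))
            (rack_prod (rack_prod (perm_rack X) Q) (rack_prod (perm_rack Y) Q'))"
proof -
  define F where "F u =
    (case map_prod prod_decode prod_decode (prod_decode u) of ((a, b), (c, d)) \<Rightarrow>
       prod_encode (prod_encode (a, c), prod_encode (b, d)))" for u
  have F: "F (prod_encode (prod_encode (a, b), prod_encode (c, d)))
      = prod_encode (prod_encode (a, c), prod_encode (b, d))" for a b c d
    by (simp add: F_def prod_encode_inverse)
  let ?L = "prod_encode ` (prod_encode ` (fst X \<times> fst Y) \<times> prod_encode ` (fst Q \<times> fst Q'))"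
  let ?R = "prod_encode ` (prod_encode ` (fst X \<times> fst Q) \<times> prod_encode ` (fst Y \<times> fst Q'))"
  have "bij_betw F ?L ?R"
    by (rule bij_betw_byWitness[where f' = F]) (auto simp: F)
  moreover have "F (snd (rack_prod (perm_rack (zset_prod X Y)) (rack_prod Q Q')) u v) =
      snd (rack_prod (rack_prod (perm_rack X) Q) (rack_prod (perm_rack Y) Q')) (F u) (F v)"
    if "u \<in> ?L" "v \<in> ?L" for u v
    using that by (auto simp: F)
  ultimately show ?thesis
    unfolding rack_iso_def rack_prod_carrier perm_rack_carrier zset_prod_carrier by blast
qed

subsection \<open>The map to the Burnside ring of racks\<close>

definition perm_product :: "zs \<times> rk \<Rightarrow> rk" where
  "perm_product = (\<lambda>(X, Q). rack_prod (perm_rack X) Q)"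

lemma perm_product_apply: "perm_product (X, Q) = rack_prod (perm_rack X) Q"
  by (simp add: perm_product_def)

lemma burnside_map_eq: "burnside_map = linext perm_product"
  by (simp add: burnside_map_def perm_product_def)

lemma perm_product_carrier: "fst (perm_product (X, Q)) = prod_encode ` (fst X \<times> fst Q)"
  by (simp add: perm_product_apply rack_prod_carrier)

lemma perm_product_op [simp]:
  "snd (perm_product (X, Q)) (prod_encode (a, b)) (prod_encode (c, d))
    = prod_encode (snd X c, snd Q b d)"
  by (simp add: perm_product_apply)

lemma finite_rack_perm_product: "is_zset X \<Longrightarrow> finite_rack Q \<Longrightarrow> finite_rack (perm_product (X, Q))"
  by (simp add: perm_product_apply finite_rack_prod finite_rack_perm_rack)

lemma card_perm_product:
  "finite (fst X) \<Longrightarrow> finite (fst Q) \<Longrightarrow> card (fst (perm_product (X, Q))) = card (fst X) * card (fst Q)"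
  by (simp add: perm_product_apply card_rack_prod)

lemma perm_product_iso:
  "zset_iso X X' \<Longrightarrow> rack_iso Q Q' \<Longrightarrow> rack_iso (perm_product (X, Q)) (perm_product (X', Q'))"
  by (simp add: perm_product_apply rack_prod_iso perm_rack_iso)

lemma perm_product_decomp_left:
  "zset_decomp X S T \<Longrightarrow> is_rack Q
    \<Longrightarrow> rack_decomp (perm_product (X, Q)) (prod_encode ` (S \<times> fst Q)) (prod_encode ` (T \<times> fst Q))"
  by (simp add: perm_product_apply rack_decomp_prod_left zset_decomp_perm_rack carrier_subrack)

lemma perm_product_decomp_right:
  "is_zset X \<Longrightarrow> rack_decomp Q S T
    \<Longrightarrow> rack_decomp (perm_product (X, Q)) (prod_encode ` (fst X \<times> S)) (prod_encode ` (fst X \<times> T))"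
  using rack_decomp_prod_right[OF carrier_subrack[OF perm_rack_rack]] by (simp add: perm_product_apply)

lemma perm_product_restrict_left:
  "perm_product ((S, snd X), Q) = (prod_encode ` (S \<times> fst Q), snd (perm_product (X, Q)))"
  by (simp add: perm_product_apply perm_rack_restrict rack_prod_restrict_left)

lemma perm_product_restrict_right:
  "perm_product (X, (S, snd Q)) = (prod_encode ` (fst X \<times> S), snd (perm_product (X, Q)))"
  by (simp add: perm_product_apply rack_prod_restrict_right)

lemma zset_rels_finsupp: "r \<in> zset_rels \<Longrightarrow> finsupp r"
  by (auto simp: zset_rels_def)

lemma quandle_rels_finsupp: "r \<in> quandle_rels \<Longrightarrow> finsupp r"
  by (auto simp: quandle_rels_def)

lemma rack_rel_iso:
  "finite_rack R1 \<Longrightarrow> finite_rack R2 \<Longrightarrow> rack_iso R1 R2 \<Longrightarrow> (\<lambda>x. gen R1 x - gen R2 x) \<in> rack_rels"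
  unfolding rack_rels_def by blast

lemma rack_rel_decomp:
  "finite_rack R \<Longrightarrow> rack_decomp R S T
    \<Longrightarrow> (\<lambda>x. gen R x - gen (S, snd R) x - gen (T, snd R) x) \<in> rack_rels"
  unfolding rack_rels_def by blast

lemma linext_perm_product_zset_rel:
  assumes r: "r \<in> zset_rels" and Q: "finite_quandle Q"
  shows "linext (\<lambda>X. perm_product (X, Q)) r \<in> rack_rels"
proof -
  have Q': "finite_rack Q" "is_rack Q"
    using finite_quandle_imp_finite_rack[OF Q] by (auto simp: finite_rack_def)
  from r consider (iso) X1 X2 where "r = (\<lambda>x. gen X1 x - gen X2 x)"
      "is_zset X1" "is_zset X2" "zset_iso X1 X2"
    | (decomp) X S T where "r = (\<lambda>x. gen X x - gen (S, snd X) x - gen (T, snd X) x)"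
      "is_zset X" "zset_decomp X S T"
    unfolding zset_rels_def by blast
  then show ?thesis
  proof cases
    case iso
    then show ?thesis
      by (simp add: linext_gen_diff rack_rel_iso finite_rack_perm_product Q' perm_product_iso
          rack_iso_refl)
  next
    case decomp
    then show ?thesis
      using rack_rel_decomp[OF finite_rack_perm_product[OF decomp(2) Q'(1)]
          perm_product_decomp_left[OF decomp(3) Q'(2)]]
      by (simp add: linext_gen_diff3 perm_product_restrict_left)
  qed
qed

lemma linext_perm_product_quandle_rel:
  assumes r: "r \<in> quandle_rels" and X: "is_zset X"
  shows "linext (\<lambda>Q. perm_product (X, Q)) r \<in> rack_rels"
proof -
  from r consider (iso) Q1 Q2 where "r = (\<lambda>x. gen Q1 x - gen Q2 x)"
      "finite_quandle Q1" "finite_quandle Q2" "rack_iso Q1 Q2"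
    | (decomp) Q S T where "r = (\<lambda>x. gen Q x - gen (S, snd Q) x - gen (T, snd Q) x)"
      "finite_quandle Q" "rack_decomp Q S T"
    unfolding quandle_rels_def by blast
  then show ?thesis
  proof cases
    case iso
    then show ?thesis
      by (simp add: linext_gen_diff rack_rel_iso finite_rack_perm_product X
          finite_quandle_imp_finite_rack perm_product_iso zset_iso_refl)
  next
    case decomp
    then show ?thesis
      using rack_rel_decomp[OF finite_rack_perm_product[OF X
            finite_quandle_imp_finite_rack[OF decomp(2)]]
          perm_product_decomp_right[OF X decomp(3)]]
      by (simp add: linext_gen_diff3 perm_product_restrict_right)
  qed
qed

lemma tensor_rel_left_eq_linext: "(\<lambda>(X, Q). if Q = Q0 then r X else 0) = linext (\<lambda>X. (X, Q0)) r"
proof (intro ext, clarify)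
  fix X Q
  have "{x. r x \<noteq> 0 \<and> (x, Q0) = (X, Q)} = (if Q = Q0 \<and> r X \<noteq> 0 then {X} else {})" by auto
  then show "(if Q = Q0 then r X else 0) = linext (\<lambda>X. (X, Q0)) r (X, Q)" by (simp add: linext_def)
qed

lemma tensor_rel_right_eq_linext: "(\<lambda>(X, Q). if X = X0 then s Q else 0) = linext (\<lambda>Q. (X0, Q)) s"
proof (intro ext, clarify)
  fix X Q
  have "{x. s x \<noteq> 0 \<and> (X0, x) = (X, Q)} = (if X = X0 \<and> s Q \<noteq> 0 then {Q} else {})" by auto
  then show "(if X = X0 then s Q else 0) = linext (\<lambda>Q. (X0, Q)) s (X, Q)" by (simp add: linext_def)
qed

lemma tensor_rels_image:
  assumes "r \<in> tensor_rels"
  shows "finsupp r \<and> linext perm_product r \<in> rack_rels"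
  using assms unfolding tensor_rels_def
proof (elim UnE CollectE exE conjE)
  fix r0 Q0 assume "r = (\<lambda>(X, Q). if Q = Q0 then r0 X else 0)" "r0 \<in> zset_rels" "finite_quandle Q0"
  then show ?thesis
    by (simp add: tensor_rel_left_eq_linext finsupp_linext linext_linext zset_rels_finsupp
        linext_perm_product_zset_rel)
next
  fix X0 s assume "r = (\<lambda>(X, Q). if X = X0 then s Q else 0)" "is_zset X0" "s \<in> quandle_rels"
  then show ?thesis
    by (simp add: tensor_rel_right_eq_linext finsupp_linext linext_linext quandle_rels_finsupp
        linext_perm_product_quandle_rel)
qed

lemma burnside_map_respects_rels: "c \<in> zspan tensor_rels \<Longrightarrow> burnside_map c \<in> zspan rack_rels"
  unfolding burnside_map_eq by (rule linext_zspan) (auto simp: tensor_rels_image zspan_base)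

lemma burnside_map_mult:
  assumes c: "c \<in> FS tensor_gens" and d: "d \<in> FS tensor_gens"
  shows "(\<lambda>x. burnside_map (conv tensor_mult c d) x
      - conv rack_prod (burnside_map c) (burnside_map d) x)
    \<in> zspan rack_rels"
proof -
  have fin: "finsupp c" "finsupp d" and gens: "supp c \<subseteq> tensor_gens" "supp d \<subseteq> tensor_gens"
    using c d by (auto simp: FS_iff)
  let ?cd = "\<lambda>(x, y). c x * d y"
  have "burnside_map (conv tensor_mult c d)
      = linext (\<lambda>pq. perm_product (case_prod tensor_mult pq)) ?cd"
    unfolding burnside_map_eq conv_def by (simp add: linext_linext finsupp_tensor fin)
  moreover have "conv rack_prod (burnside_map c) (burnside_map d)
      = linext (\<lambda>(p, q). rack_prod (perm_product p) (perm_product q)) ?cd"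
    unfolding burnside_map_eq by (rule conv_linext[OF fin])
  moreover have "(\<lambda>y. gen (perm_product (case_prod tensor_mult pq)) y
      - gen (case pq of (p, q) \<Rightarrow> rack_prod (perm_product p) (perm_product q)) y) \<in> zspan rack_rels"
    if "pq \<in> supp ?cd" for pq
  proof -
    obtain X Q Y Q' where pq: "pq = ((X, Q), (Y, Q'))" by (metis prod.collapse)
    have XQ: "is_zset X" "finite_rack Q" "is_zset Y" "finite_rack Q'"
      using that gens by (auto simp: pq supp_tensor tensor_gens_def finite_quandle_imp_finite_rack)
    have "rack_iso (perm_product (tensor_mult (X, Q) (Y, Q')))
        (rack_prod (perm_product (X, Q)) (perm_product (Y, Q')))"
      by (simp add: tensor_mult_def perm_product_apply rack_prod_interchange_iso)
    then show ?thesis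
      unfolding pq using XQ
      by (auto intro!: zspan_base rack_rel_iso finite_rack_perm_product finite_rack_prod
          zset_prod_zset simp: tensor_mult_def)
  qed
  ultimately show ?thesis
    by (simp add: linext_diff_in_zspan finsupp_tensor fin)
qed

lemma burnside_map_one:
  "(\<lambda>x. burnside_map (gen (zset_one, rack_one)) x - gen rack_one x) \<in> zspan rack_rels"
proof -
  have "perm_product (zset_one, rack_one) = rack_one"
    by (auto simp: perm_product_apply rack_prod_def perm_rack_def zset_one_def rack_one_def
        prod_encode_def)
  then show ?thesis by (simp add: burnside_map_eq zspan.zero)
qed

subsection \<open>Counting copies of a connected rack\<close>

text \<open>For finite racks, closure under all left multiplications is invariance under the inner
  automorphism group, so this is the usual notion of a connected rack.\<close>

definition connected_rack :: "rk \<Rightarrow> bool" where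
  "connected_rack K \<longleftrightarrow>
     fst K \<noteq> {} \<and> (\<forall>A\<subseteq>fst K. (\<forall>k\<in>fst K. snd K k ` A \<subseteq> A) \<longrightarrow> A = {} \<or> A = fst K)"

definition copies :: "rk \<Rightarrow> rk \<Rightarrow> int" where
  "copies K R = int (card {A. A \<subseteq> fst R \<and> rack_iso K (A, snd R)})"

lemma rack_iso_image:
  assumes K: "rack_iso K (A, snd R)" and A: "A \<subseteq> fst R" and f: "bij_betw f (fst R) (fst R')"
    and hom: "\<forall>a\<in>fst R. \<forall>b\<in>fst R. f (snd R a b) = snd R' (f a) (f b)"
  shows "rack_iso K (f ` A, snd R')"
proof -
  obtain h where h: "bij_betw h (fst K) A"
    and hh: "\<forall>a\<in>fst K. \<forall>b\<in>fst K. h (snd K a b) = snd R (h a) (h b)"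
    using K unfolding rack_iso_def by auto
  have "bij_betw f A (f ` A)" using f A by (meson bij_betw_def bij_betw_subset)
  then have "bij_betw (f \<circ> h) (fst K) (f ` A)" by (rule bij_betw_trans[OF h])
  moreover have "(f \<circ> h) (snd K a b) = snd R' ((f \<circ> h) a) ((f \<circ> h) b)"
    if "a \<in> fst K" "b \<in> fst K" for a b
  proof -
    have "h a \<in> fst R" "h b \<in> fst R" using that h A by (auto simp: bij_betw_def)
    then show ?thesis using hh hom that by simp
  qed
  ultimately show ?thesis unfolding rack_iso_def by auto
qed

lemma copies_mono:
  assumes iso: "rack_iso R R'" and fin: "finite (fst R')"
  shows "copies K R \<le> copies K R'"
proof -
  obtain f where f: "bij_betw f (fst R) (fst R')"
    and hom: "\<forall>a\<in>fst R. \<forall>b\<in>fst R. f (snd R a b) = snd R' (f a) (f b)"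
    using iso unfolding rack_iso_def by blast
  let ?S = "{A. A \<subseteq> fst R \<and> rack_iso K (A, snd R)}"
  let ?S' = "{A. A \<subseteq> fst R' \<and> rack_iso K (A, snd R')}"
  have "inj_on (image f) ?S"
    by (rule inj_on_subset[OF inj_on_image_Pow]) (use f in \<open>auto simp: bij_betw_def\<close>)
  moreover have "image f ` ?S \<subseteq> ?S'"
  proof clarify
    fix A assume "A \<subseteq> fst R" "rack_iso K (A, snd R)"
    then show "f ` A \<subseteq> fst R' \<and> rack_iso K (f ` A, snd R')"
      using rack_iso_image[OF _ _ f hom] by (blast dest: bij_betw_apply[OF f])
  qed
  moreover have "finite ?S'" using fin by (auto intro: finite_subset[of _ "Pow (fst R')"])
  ultimately show ?thesis unfolding copies_def by (simp add: card_inj_on_le)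
qed

lemma copies_iso:
  assumes "is_rack R" "rack_iso R R'" "finite (fst R)" "finite (fst R')"
  shows "copies K R = copies K R'"
  using copies_mono[OF assms(2,4)] copies_mono[OF rack_iso_sym[OF assms(1,2)] assms(3)]
  by (rule order_antisym)

lemma rack_decomp_invariant:
  assumes R: "is_rack R" and d: "rack_decomp R S T" and r: "r \<in> fst R"
  shows "snd R r ` S \<subseteq> S"
proof (cases "r \<in> S")
  case True
  then show ?thesis using d by (auto simp: rack_decomp_def is_subrack_def)
next
  case False
  then have "r \<in> T" using d r by (auto simp: rack_decomp_def)
  then have "snd R r ` T = T" "S = fst R - T" "T \<subseteq> fst R"
    using d by (auto simp: rack_decomp_def is_subrack_def)
  moreover have "bij_betw (snd R r) (fst R) (fst R)" using R r by (simp add: is_rack_def)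
  ultimately show ?thesis
    using inj_on_image_set_diff[of "snd R r" "fst R" "fst R" T] by (simp add: bij_betw_def)
qed

lemma connected_copy_in_part:
  assumes R: "is_rack R" "rack_decomp R S T" and K: "connected_rack K" "is_rack K"
    and A: "A \<subseteq> fst R" "rack_iso K (A, snd R)"
  shows "A \<subseteq> S \<or> A \<subseteq> T"
proof -
  obtain h where h: "bij_betw h (fst K) A"
    and hom: "\<forall>a\<in>fst K. \<forall>b\<in>fst K. h (snd K a b) = snd R (h a) (h b)"
    using A(2) unfolding rack_iso_def by auto
  let ?B = "{k \<in> fst K. h k \<in> S}"
  have "\<forall>k\<in>fst K. snd K k ` ?B \<subseteq> ?B"
  proof (intro ballI, clarify)
    fix k assume k: "k \<in> fst K"
    fix b assume b: "b \<in> fst K" "h b \<in> S"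
    have "h k \<in> fst R" using h k A(1) by (auto simp: bij_betw_def)
    then have "snd R (h k) (h b) \<in> S" using rack_decomp_invariant[OF R] b(2) by blast
    then show "snd K k b \<in> fst K \<and> h (snd K k b) \<in> S"
      using rack_closed[OF K(2) k b(1)] hom k b(1) by auto
  qed
  moreover have "?B \<subseteq> fst K" by blast
  ultimately have "?B = {} \<or> ?B = fst K" using K(1) unfolding connected_rack_def by blast
  moreover have "A = h ` fst K" using h by (simp add: bij_betw_def)
  moreover have "fst R - S \<subseteq> T" using R(2) by (auto simp: rack_decomp_def)
  ultimately show ?thesis using A(1) by blast
qed

lemma copies_decomp:
  assumes R: "finite_rack R" "rack_decomp R S T" and K: "connected_rack K" "is_rack K"
  shows "copies K R = copies K (S, snd R) + copies K (T, snd R)"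
proof -
  let ?C = "\<lambda>U. {A. A \<subseteq> U \<and> rack_iso K (A, snd R)}"
  have ST: "S \<inter> T = {}" "S \<union> T = fst R" "finite S" "finite T"
    using R by (auto simp: rack_decomp_def finite_rack_def intro: finite_subset)
  have "?C (fst R) = ?C S \<union> ?C T"
    using connected_copy_in_part[OF _ R(2) K] R(1) ST(2) by (auto simp: finite_rack_def)
  moreover have "A \<noteq> {}" if "rack_iso K (A, snd R)" for A
    using that K(1) by (auto simp: rack_iso_def connected_rack_def bij_betw_def)
  then have "?C S \<inter> ?C T = {}" using ST(1) by blast
  moreover have "finite (?C S)" "finite (?C T)"
    using ST(3,4) by (auto intro: finite_subset[of _ "Pow _"])
  ultimately show ?thesis unfolding copies_def by (simp add: card_Un_disjoint)
qed

lemma copies_of_small: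
  assumes "finite (fst R)" "card (fst R) \<le> card (fst K)"
  shows "copies K R = (if rack_iso K R then 1 else 0)"
proof -
  have "A = fst R" if "A \<subseteq> fst R" "rack_iso K (A, snd R)" for A
  proof -
    have "card A = card (fst K)" using that(2) by (auto simp: rack_iso_def bij_betw_same_card)
    then show ?thesis using card_seteq[OF assms(1) that(1)] assms(2) by simp
  qed
  then have "{A. A \<subseteq> fst R \<and> rack_iso K (A, snd R)} = (if rack_iso K R then {fst R} else {})"
    by (cases R) auto
  then show ?thesis by (simp add: copies_def)
qed

lemma weighted_sum_copies_rack_rels:
  assumes K: "connected_rack K" "is_rack K" and h: "h \<in> zspan rack_rels"
  shows "weighted_sum (copies K) h = 0"
proof (rule weighted_sum_zspan[OF h])
  fix r assume "r \<in> rack_rels"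
  then consider (iso) R1 R2 where "r = (\<lambda>x. gen R1 x - gen R2 x)"
      "finite_rack R1" "finite_rack R2" "rack_iso R1 R2"
    | (decomp) R S T where "r = (\<lambda>x. gen R x - gen (S, snd R) x - gen (T, snd R) x)"
      "finite_rack R" "rack_decomp R S T"
    unfolding rack_rels_def by blast
  then show "finsupp r \<and> weighted_sum (copies K) r = 0"
  proof cases
    case iso
    then show ?thesis by (simp add: weighted_sum_diff copies_iso finite_rack_def)
  next
    case decomp
    then show ?thesis by (simp add: weighted_sum_diff copies_decomp[OF _ _ K])
  qed
qed

subsection \<open>Indecomposable generators\<close>

definition cyclic_zset :: "zs \<Rightarrow> bool" where
  "cyclic_zset X \<longleftrightarrow>
     is_zset X \<and> fst X \<noteq> {} \<and> (\<forall>A\<subseteq>fst X. snd X ` A \<subseteq> A \<longrightarrow> A = {} \<or> A = fst X)"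

lemma cyclic_zset_invariant:
  assumes "cyclic_zset X" "C \<subseteq> fst X" "snd X ` C \<subseteq> C" "x \<in> C"
  shows "C = fst X"
  using assms(1) unfolding cyclic_zset_def
  by (elim conjE allE[where x = C]) (use assms(2-4) in auto)

lemma connected_rack_invariant:
  assumes "connected_rack Q" "B \<subseteq> fst Q" "\<And>p. p \<in> fst Q \<Longrightarrow> snd Q p ` B \<subseteq> B" "q \<in> B"
  shows "B = fst Q"
  using assms(1) unfolding connected_rack_def
  by (elim conjE allE[where x = B]) (use assms(2-4) in auto)

lemma connected_perm_product:
  assumes X: "cyclic_zset X" and Q: "connected_rack Q" "is_quandle Q"
  shows "connected_rack (perm_product (X, Q))"
  unfolding connected_rack_def perm_product_carrier
proof (intro conjI allI impI)
  have Xz: "is_zset X" and Qr: "is_rack Q" using X Q by (auto simp: cyclic_zset_def is_quandle_def)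
  show "prod_encode ` (fst X \<times> fst Q) \<noteq> {}"
    using X Q by (auto simp: cyclic_zset_def connected_rack_def)
  fix A assume A: "A \<subseteq> prod_encode ` (fst X \<times> fst Q)"
    and inv: "\<forall>k\<in>prod_encode ` (fst X \<times> fst Q). snd (perm_product (X, Q)) k ` A \<subseteq> A"
  have closed: "prod_encode (snd X y, snd Q p q) \<in> A"
    if "x \<in> fst X" "p \<in> fst Q" "prod_encode (y, q) \<in> A" for x p y q
  proof -
    have "snd (perm_product (X, Q)) (prod_encode (x, p)) (prod_encode (y, q)) \<in> A"
      using inv that by blast
    then show ?thesis by simp
  qed
  show "A = {} \<or> A = prod_encode ` (fst X \<times> fst Q)"
  proof (cases "A = {}")
    case False
    then obtain x0 q0 where x0: "x0 \<in> fst X" "q0 \<in> fst Q" "prod_encode (x0, q0) \<in> A"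
      using A by blast
    have "snd Q q0 q0 = q0" using Q(2) x0(2) by (simp add: is_quandle_def)
    then have "prod_encode (snd X x, q0) \<in> A" if "x \<in> fst X" "prod_encode (x, q0) \<in> A" for x
      using closed[OF that(1) x0(2) that(2)] by simp
    then have "{x \<in> fst X. prod_encode (x, q0) \<in> A} = fst X"
      using x0 by (intro cyclic_zset_invariant[OF X]) (auto simp: zset_closed[OF Xz])
    let ?B = "{q \<in> fst Q. \<forall>x\<in>fst X. prod_encode (x, q) \<in> A}"
    have "snd Q p ` ?B \<subseteq> ?B" if p: "p \<in> fst Q" for p
    proof clarify
      fix q assume q: "q \<in> fst Q" "\<forall>x\<in>fst X. prod_encode (x, q) \<in> A"
      have "prod_encode (x, snd Q p q) \<in> A" if x: "x \<in> fst X" for x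
      proof -
        obtain y where "y \<in> fst X" "x = snd X y" using zset_surj[OF Xz x] by blast
        then show ?thesis using closed[OF _ p] q(2) by blast
      qed
      then show "snd Q p q \<in> fst Q \<and> (\<forall>x\<in>fst X. prod_encode (x, snd Q p q) \<in> A)"
        using rack_closed[OF Qr p q(1)] by blast
    qed
    moreover have "q0 \<in> ?B" using \<open>{x \<in> fst X. prod_encode (x, q0) \<in> A} = fst X\<close> x0(2) by blast
    ultimately have "?B = fst Q" by (intro connected_rack_invariant[OF Q(1)]) blast+
    then show ?thesis using A by blast
  qed simp
qed

lemma invariant_subset_complement:
  assumes f: "bij_betw f C C" and "finite C" "A \<subseteq> C" "f ` A \<subseteq> A"
  shows "f ` A = A" "f ` (C - A) = C - A"
proof -
  have inj: "inj_on f C" using f by (simp add: bij_betw_def)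
  have "finite A" using assms(2,3) by (rule finite_subset[rotated])
  then show fA: "f ` A = A"
    using card_subset_eq[OF _ assms(4)] card_image[OF inj_on_subset[OF inj assms(3)]] by simp
  show "f ` (C - A) = C - A"
    using inj_on_image_set_diff[OF inj] assms(3) fA f by (simp add: bij_betw_def)
qed

lemma zset_split:
  assumes X: "is_zset X" "fst X \<noteq> {}" "\<not> cyclic_zset X"
  obtains A where "A \<subset> fst X" "A \<noteq> {}" "zset_decomp X A (fst X - A)"
proof -
  obtain A where A: "A \<subseteq> fst X" "snd X ` A \<subseteq> A" "A \<noteq> {}" "A \<noteq> fst X"
    using X unfolding cyclic_zset_def by blast
  have "zset_decomp X A (fst X - A)"
    using invariant_subset_complement[OF _ _ A(1,2)] X(1) A(1)
    by (auto simp: zset_decomp_def is_zset_def)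
  then show ?thesis using that A by blast
qed

lemma zset_decomp_parts:
  assumes "is_zset X" "zset_decomp X S T"
  shows "is_zset (S, snd X)" "is_zset (T, snd X)"
  using assms unfolding is_zset_def zset_decomp_def bij_betw_def
  by (auto intro: finite_subset inj_on_subset)

lemma quandle_split:
  assumes Q: "finite_quandle Q" "fst Q \<noteq> {}" "\<not> connected_rack Q"
  obtains A where "A \<subset> fst Q" "A \<noteq> {}" "rack_decomp Q A (fst Q - A)"
proof -
  obtain A where A: "A \<subseteq> fst Q" "\<forall>k\<in>fst Q. snd Q k ` A \<subseteq> A" "A \<noteq> {}" "A \<noteq> fst Q"
    using Q unfolding connected_rack_def by blast
  have inv: "snd Q k ` A = A" "snd Q k ` (fst Q - A) = fst Q - A" if "k \<in> fst Q" for k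
    using invariant_subset_complement[OF _ _ A(1)] A(2) Q(1) that
    by (auto simp: finite_quandle_def is_quandle_def is_rack_def)
  have "rack_decomp Q A (fst Q - A)"
    unfolding rack_decomp_def is_subrack_def using A(1) inv by blast
  then show ?thesis using that A by blast
qed

lemma finite_quandle_subrack:
  assumes Q: "finite_quandle Q" and A: "is_subrack A Q"
  shows "finite_quandle (A, snd Q)"
proof -
  have AQ: "A \<subseteq> fst Q" "\<forall>s\<in>A. snd Q s ` A = A" using A by (auto simp: is_subrack_def)
  have "bij_betw (snd Q a) A A" if "a \<in> A" for a
    using Q AQ that inj_on_subset[of "snd Q a" "fst Q" A]
    by (auto simp: finite_quandle_def is_quandle_def is_rack_def bij_betw_def)
  moreover have "\<forall>a\<in>A. \<forall>b\<in>A. \<forall>c\<in>A. snd Q a (snd Q b c) = snd Q (snd Q a b) (snd Q a c)"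
    "\<forall>a\<in>A. snd Q a a = a"
    using Q AQ(1) unfolding finite_quandle_def is_quandle_def is_rack_def by blast+
  ultimately show ?thesis
    using Q finite_subset[OF AQ(1)] by (simp add: finite_quandle_def is_quandle_def is_rack_def)
qed

text \<open>An isomorphism \<open>(X,\<pi>) \<times> Q \<cong> (X',\<pi>') \<times> Q'\<close>, read on pairs, where the operation
  of \<open>(X,\<pi>) \<times> Q\<close> is \<open>(x,q) \<rhd> (y,p) = (\<pi> y, q \<rhd> p)\<close>.\<close>

locale perm_product_pair_iso =
  fixes X :: zs and Q :: rk and X' :: zs and Q' :: rk and \<Phi> :: "nat \<times> nat \<Rightarrow> nat \<times> nat"
  assumes X: "cyclic_zset X" and Q: "is_quandle Q" and Q': "is_quandle Q'"
    and bij: "bij_betw \<Phi> (fst X \<times> fst Q) (fst X' \<times> fst Q')"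
    and hom: "\<And>u v. u \<in> fst X \<times> fst Q \<Longrightarrow> v \<in> fst X \<times> fst Q \<Longrightarrow>
      \<Phi> (snd X (fst v), snd Q (snd u) (snd v))
        = (snd X' (fst (\<Phi> v)), snd Q' (snd (\<Phi> u)) (snd (\<Phi> v)))"
begin

lemma maps_to: "x \<in> fst X \<Longrightarrow> q \<in> fst Q \<Longrightarrow> fst (\<Phi> (x, q)) \<in> fst X' \<and> snd (\<Phi> (x, q)) \<in> fst Q'"
  using bij_betw_apply[OF bij, of "(x, q)"] by auto

lemma hom_diagonal:
  assumes "x \<in> fst X" "q \<in> fst Q"
  shows "\<Phi> (snd X x, q) = (snd X' (fst (\<Phi> (x, q))), snd (\<Phi> (x, q)))"
proof -
  have "snd Q q q = q" "snd Q' (snd (\<Phi> (x, q))) (snd (\<Phi> (x, q))) = snd (\<Phi> (x, q))"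
    using Q Q' maps_to[OF assms] assms by (auto simp: is_quandle_def)
  then show ?thesis using hom[of "(x, q)" "(x, q)"] assms by simp
qed

lemma snd_independent:
  assumes "x \<in> fst X" "x' \<in> fst X" "q \<in> fst Q"
  shows "snd (\<Phi> (x, q)) = snd (\<Phi> (x', q))"
proof -
  have Xz: "is_zset X" using X by (simp add: cyclic_zset_def)
  let ?D = "{y \<in> fst X. snd (\<Phi> (y, q)) = snd (\<Phi> (x', q))}"
  have "?D = fst X"
  proof (rule cyclic_zset_invariant[OF X])
    show "snd X ` ?D \<subseteq> ?D" using hom_diagonal[OF _ assms(3)] zset_closed[OF Xz] by auto
  qed (use assms(2) in auto)
  then show ?thesis using assms(1) by blast
qed

lemma zset_embedding:
  assumes b: "b \<in> fst Q"
  shows "\<exists>f. inj_on f (fst X) \<and> f ` fst X \<subseteq> fst X' \<and> (\<forall>x\<in>fst X. f (snd X x) = snd X' (f x))"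
proof (intro exI conjI)
  let ?f = "\<lambda>x. fst (\<Phi> (x, b))"
  show "inj_on ?f (fst X)"
  proof (rule inj_onI)
    fix x y assume xy: "x \<in> fst X" "y \<in> fst X" "?f x = ?f y"
    then have "\<Phi> (x, b) = \<Phi> (y, b)" using snd_independent[OF xy(1,2) b] by (simp add: prod_eq_iff)
    moreover have "inj_on \<Phi> (fst X \<times> fst Q)" using bij by (simp add: bij_betw_def)
    ultimately show "x = y" using xy(1,2) b by (auto dest: inj_onD)
  qed
  show "?f ` fst X \<subseteq> fst X'" using maps_to[OF _ b] by blast
  show "\<forall>x\<in>fst X. ?f (snd X x) = snd X' (?f x)" using hom_diagonal[OF _ b] by simp
qed

lemma quandle_hom_onto:
  assumes a: "a \<in> fst X" and X': "fst X' \<noteq> {}"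
  shows "\<exists>g. g ` fst Q = fst Q' \<and> (\<forall>q\<in>fst Q. \<forall>p\<in>fst Q. g (snd Q q p) = snd Q' (g q) (g p))"
proof (intro exI conjI ballI)
  let ?g = "\<lambda>q. snd (\<Phi> (a, q))"
  show "?g ` fst Q = fst Q'"
  proof
    show "?g ` fst Q \<subseteq> fst Q'" using maps_to[OF a] by blast
    show "fst Q' \<subseteq> ?g ` fst Q"
    proof
      fix q' assume q': "q' \<in> fst Q'"
      obtain a' where "a' \<in> fst X'" using X' by blast
      then have "(a', q') \<in> \<Phi> ` (fst X \<times> fst Q)" using bij q' by (simp add: bij_betw_def)
      then obtain x q where xq: "x \<in> fst X" "q \<in> fst Q" "\<Phi> (x, q) = (a', q')" by auto
      then show "q' \<in> ?g ` fst Q" using snd_independent[OF xq(1) a xq(2)] by force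
    qed
  qed
  fix q p assume qp: "q \<in> fst Q" "p \<in> fst Q"
  have "snd Q q p \<in> fst Q" using Q qp by (simp add: rack_closed is_quandle_def)
  moreover have "snd X a \<in> fst X" using zset_closed X a by (simp add: cyclic_zset_def)
  ultimately have "?g (snd Q q p) = snd (\<Phi> (snd X a, snd Q q p))"
    using snd_independent a by metis
  also have "\<dots> = snd Q' (?g q) (?g p)" using hom[of "(a, q)" "(a, p)"] a qp by simp
  finally show "?g (snd Q q p) = snd Q' (?g q) (?g p)" .
qed

end

lemma perm_product_pair_iso_exists:
  assumes "cyclic_zset X" "is_quandle Q" "is_quandle Q'"
    and iso: "rack_iso (perm_product (X, Q)) (perm_product (X', Q'))"
  obtains \<Phi> where "perm_product_pair_iso X Q X' Q' \<Phi>"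
proof -
  obtain F where F: "bij_betw F (prod_encode ` (fst X \<times> fst Q)) (prod_encode ` (fst X' \<times> fst Q'))"
    and hom: "\<forall>u\<in>prod_encode ` (fst X \<times> fst Q). \<forall>v\<in>prod_encode ` (fst X \<times> fst Q).
      F (snd (perm_product (X, Q)) u v) = snd (perm_product (X', Q')) (F u) (F v)"
    using iso unfolding rack_iso_def perm_product_carrier by blast
  let ?\<Phi> = "\<lambda>p. prod_decode (F (prod_encode p))"
  have enc: "\<exists>x' q'. F (prod_encode (x, q)) = prod_encode (x', q')"
    if "x \<in> fst X" "q \<in> fst Q" for x q
    using bij_betw_apply[OF F, of "prod_encode (x, q)"] that by auto
  have "perm_product_pair_iso X Q X' Q' ?\<Phi>"
  proof
    show "bij_betw ?\<Phi> (fst X \<times> fst Q) (fst X' \<times> fst Q')" by (rule bij_betw_decoded[OF F])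
    fix u v assume uv: "u \<in> fst X \<times> fst Q" "v \<in> fst X \<times> fst Q"
    then obtain x q y p where u: "u = (x, q)" "x \<in> fst X" "q \<in> fst Q"
      and v: "v = (y, p)" "y \<in> fst X" "p \<in> fst Q"
      by blast
    obtain x' q' y' p' where "F (prod_encode (x, q)) = prod_encode (x', q')"
      and "F (prod_encode (y, p)) = prod_encode (y', p')"
      using enc u v by metis
    moreover have "F (prod_encode (snd X y, snd Q q p))
        = snd (perm_product (X', Q')) (F (prod_encode (x, q))) (F (prod_encode (y, p)))"
      using hom u v by auto
    ultimately show "?\<Phi> (snd X (fst v), snd Q (snd u) (snd v))
        = (snd X' (fst (?\<Phi> v)), snd Q' (snd (?\<Phi> u)) (snd (?\<Phi> v)))"
      by (simp add: u v prod_encode_inverse)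
  qed (use assms in auto)
  then show thesis by (rule that)
qed

lemma perm_product_cancel:
  assumes X: "cyclic_zset X" and X': "cyclic_zset X'"
    and Q: "finite_quandle Q" "fst Q \<noteq> {}" and Q': "finite_quandle Q'" "fst Q' \<noteq> {}"
    and iso: "rack_iso (perm_product (X, Q)) (perm_product (X', Q'))"
  shows "zset_iso X X' \<and> rack_iso Q Q'"
proof -
  have Xz: "is_zset X" "is_zset X'" and fX: "finite (fst X)" "finite (fst X')"
    and neX: "fst X \<noteq> {}" "fst X' \<noteq> {}" using X X' by (auto simp: cyclic_zset_def is_zset_def)
  have fQ: "finite (fst Q)" "finite (fst Q')" and qQ: "is_quandle Q" "is_quandle Q'"
    using Q Q' by (auto simp: finite_quandle_def)
  have iso': "rack_iso (perm_product (X', Q')) (perm_product (X, Q))"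
    using rack_iso_sym[OF _ iso]
      finite_rack_perm_product[OF Xz(1) finite_quandle_imp_finite_rack[OF Q(1)]]
    by (simp add: finite_rack_def)
  obtain \<Phi> where \<Phi>: "perm_product_pair_iso X Q X' Q' \<Phi>"
    using perm_product_pair_iso_exists[OF X qQ iso] .
  obtain \<Psi> where \<Psi>: "perm_product_pair_iso X' Q' X Q \<Psi>"
    using perm_product_pair_iso_exists[OF X' qQ(2,1) iso'] .
  obtain a b a' b' where ab: "a \<in> fst X" "b \<in> fst Q" "a' \<in> fst X'" "b' \<in> fst Q'"
    using neX Q(2) Q'(2) by blast
  obtain f where f: "inj_on f (fst X)" "f ` fst X \<subseteq> fst X'" "\<forall>x\<in>fst X. f (snd X x) = snd X' (f x)"
    using perm_product_pair_iso.zset_embedding[OF \<Phi> ab(2)] by blast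
  obtain f' where f': "inj_on f' (fst X')" "f' ` fst X' \<subseteq> fst X"
    using perm_product_pair_iso.zset_embedding[OF \<Psi> ab(4)] by blast
  obtain g where g: "g ` fst Q = fst Q'" "\<forall>q\<in>fst Q. \<forall>p\<in>fst Q. g (snd Q q p) = snd Q' (g q) (g p)"
    using perm_product_pair_iso.quandle_hom_onto[OF \<Phi> ab(1) neX(2)] by blast
  have cX: "card (fst X) = card (fst X')"
    using card_inj_on_le[OF f(1,2) fX(2)] card_inj_on_le[OF f'(1,2) fX(1)] by simp
  then have "f ` fst X = fst X'" using card_subset_eq[OF fX(2) f(2)] card_image[OF f(1)] by simp
  then have "zset_iso X X'" unfolding zset_iso_def using f(1,3) by (auto simp: bij_betw_def)
  moreover have "card (fst X) * card (fst Q) = card (fst X') * card (fst Q')"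
  proof -
    obtain F where "bij_betw F (fst (perm_product (X, Q))) (fst (perm_product (X', Q')))"
      using iso unfolding rack_iso_def by blast
    then show ?thesis using bij_betw_same_card card_perm_product fX fQ by metis
  qed
  then have "card (fst Q) = card (fst Q')" using cX neX fX by simp
  then have "bij_betw g (fst Q) (fst Q')"
    using g(1) fQ(1) by (simp add: bij_betw_def eq_card_imp_inj_on)
  then have "rack_iso Q Q'" unfolding rack_iso_def using g(2) by blast
  ultimately show ?thesis by simp
qed

subsection \<open>Injectivity\<close>

definition indecomposable_gens :: "(zs \<times> rk) set" where
  "indecomposable_gens = {(X, Q). cyclic_zset X \<and> finite_quandle Q \<and> connected_rack Q}"

definition equiv_to_FS :: "('a \<Rightarrow> int) set \<Rightarrow> 'a set \<Rightarrow> ('a \<Rightarrow> int) \<Rightarrow> bool" where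
  "equiv_to_FS R G a \<longleftrightarrow> (\<exists>c\<in>FS G. (\<lambda>p. a p - c p) \<in> zspan R)"

lemma FS_add:
  assumes "c \<in> FS G" "d \<in> FS G"
  shows "(\<lambda>p. c p + d p) \<in> FS G"
proof -
  have "supp (\<lambda>p. c p + d p) \<subseteq> supp c \<union> supp d" by (auto simp: supp_def)
  then show ?thesis using assms unfolding FS_iff by auto
qed

lemma FS_smult: "c \<in> FS G \<Longrightarrow> (\<lambda>p. k * c p) \<in> FS G"
  by (auto simp: FS_iff supp_def)

lemma equiv_to_FS_gen: "x \<in> G \<Longrightarrow> equiv_to_FS R G (gen x)"
  unfolding equiv_to_FS_def by (rule bexI[of _ "gen x"]) (simp_all add: FS_iff zspan.zero)

lemma equiv_to_FS_zspan: "a \<in> zspan R \<Longrightarrow> equiv_to_FS R G a"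
  unfolding equiv_to_FS_def by (rule bexI[of _ "\<lambda>_. 0"]) (simp_all add: FS_iff supp_def)

lemma equiv_to_FS_add:
  assumes "equiv_to_FS R G a" "equiv_to_FS R G b"
  shows "equiv_to_FS R G (\<lambda>p. a p + b p)"
proof -
  obtain c d where cd: "c \<in> FS G" "d \<in> FS G"
    and ac: "(\<lambda>p. a p - c p) \<in> zspan R" and bd: "(\<lambda>p. b p - d p) \<in> zspan R"
    using assms unfolding equiv_to_FS_def by blast
  have "(\<lambda>p. (a p - c p) + (b p - d p)) = (\<lambda>p. a p + b p - (c p + d p))"
    by (simp add: fun_eq_iff)
  with zspan_add[OF bd ac] have "(\<lambda>p. a p + b p - (c p + d p)) \<in> zspan R" by simp
  then show ?thesis
    unfolding equiv_to_FS_def by (rule bexI[of _ "\<lambda>p. c p + d p"]) (rule FS_add[OF cd])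
qed

lemma equiv_to_FS_smult:
  assumes "equiv_to_FS R G a"
  shows "equiv_to_FS R G (\<lambda>p. k * a p)"
proof -
  obtain c where c: "c \<in> FS G" and ac: "(\<lambda>p. a p - c p) \<in> zspan R"
    using assms unfolding equiv_to_FS_def by blast
  have "(\<lambda>p. k * (a p - c p)) = (\<lambda>p. k * a p - k * c p)"
    by (simp add: fun_eq_iff right_diff_distrib)
  with zspan_smult[OF ac, of k] have "(\<lambda>p. k * a p - k * c p) \<in> zspan R" by simp
  then show ?thesis
    unfolding equiv_to_FS_def by (rule bexI[of _ "\<lambda>p. k * c p"]) (rule FS_smult[OF c])
qed

lemma equiv_to_FS_sum:
  "finite A \<Longrightarrow> (\<And>x. x \<in> A \<Longrightarrow> equiv_to_FS R G (f x)) \<Longrightarrow> equiv_to_FS R G (\<lambda>p. \<Sum>x\<in>A. k x * f x p)"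
  by (induction A rule: finite_induct)
     (simp_all add: equiv_to_FS_zspan zspan.zero equiv_to_FS_add equiv_to_FS_smult)

lemma equiv_to_FS_split:
  assumes "(\<lambda>p. a p - b p - b' p) \<in> zspan R" "equiv_to_FS R G b" "equiv_to_FS R G b'"
  shows "equiv_to_FS R G a"
proof -
  have "equiv_to_FS R G (\<lambda>p. (a p - b p - b' p) + (b p + b' p))"
    by (rule equiv_to_FS_add[OF equiv_to_FS_zspan[OF assms(1)] equiv_to_FS_add[OF assms(2,3)]])
  then show ?thesis by simp
qed

lemma tensor_rels_leftI: "r \<in> zset_rels \<Longrightarrow> finite_quandle Q \<Longrightarrow> linext (\<lambda>X. (X, Q)) r \<in> tensor_rels"
  unfolding tensor_rels_def tensor_rel_left_eq_linext by (intro UnI1 CollectI exI conjI) auto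

lemma tensor_rels_rightI: "is_zset X \<Longrightarrow> s \<in> quandle_rels \<Longrightarrow> linext (Pair X) s \<in> tensor_rels"
  unfolding tensor_rels_def tensor_rel_right_eq_linext by (intro UnI2 CollectI exI conjI) auto

lemma tensor_rel_zset_decomp:
  assumes "is_zset X" "zset_decomp X S T" "finite_quandle Q"
  shows "(\<lambda>p. gen (X, Q) p - gen ((S, snd X), Q) p - gen ((T, snd X), Q) p) \<in> tensor_rels"
proof -
  have "(\<lambda>x. gen X x - gen (S, snd X) x - gen (T, snd X) x) \<in> zset_rels"
    using assms(1,2) unfolding zset_rels_def by blast
  then have "linext (\<lambda>Y. (Y, Q)) (\<lambda>x. gen X x - gen (S, snd X) x - gen (T, snd X) x) \<in> tensor_rels"
    using assms(3) by (rule tensor_rels_leftI)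
  then show ?thesis by (simp add: linext_gen_diff3)
qed

lemma tensor_rel_quandle_decomp:
  assumes "is_zset X" "finite_quandle Q" "rack_decomp Q S T"
  shows "(\<lambda>p. gen (X, Q) p - gen (X, (S, snd Q)) p - gen (X, (T, snd Q)) p) \<in> tensor_rels"
proof -
  have "(\<lambda>x. gen Q x - gen (S, snd Q) x - gen (T, snd Q) x) \<in> quandle_rels"
    using assms(2,3) unfolding quandle_rels_def by blast
  then have "linext (Pair X) (\<lambda>x. gen Q x - gen (S, snd Q) x - gen (T, snd Q) x) \<in> tensor_rels"
    using assms(1) by (rule tensor_rels_rightI[rotated])
  then show ?thesis by (simp add: linext_gen_diff3)
qed

lemma tensor_gen_iso:
  assumes "is_zset X" "is_zset X'" "finite_quandle Q" "finite_quandle Q'"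
    and "zset_iso X X'" "rack_iso Q Q'"
  shows "(\<lambda>p. gen (X, Q) p - gen (X', Q') p) \<in> zspan tensor_rels"
proof -
  have "(\<lambda>x. gen X x - gen X' x) \<in> zset_rels" using assms unfolding zset_rels_def by blast
  then have "linext (\<lambda>Y. (Y, Q)) (\<lambda>x. gen X x - gen X' x) \<in> tensor_rels"
    using assms(3) by (rule tensor_rels_leftI)
  then have XQ: "(\<lambda>p. gen (X, Q) p - gen (X', Q) p) \<in> zspan tensor_rels"
    by (simp add: linext_gen_diff zspan_base)
  have "(\<lambda>x. gen Q x - gen Q' x) \<in> quandle_rels" using assms unfolding quandle_rels_def by blast
  then have "linext (Pair X') (\<lambda>x. gen Q x - gen Q' x) \<in> tensor_rels"
    using assms(2) by (rule tensor_rels_rightI[rotated])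
  then have "(\<lambda>p. gen (X', Q) p - gen (X', Q') p) \<in> zspan tensor_rels"
    by (simp add: linext_gen_diff zspan_base)
  from zspan_add[OF this XQ] show ?thesis by simp
qed

lemma gen_equiv_to_indecomposables:
  "is_zset X \<Longrightarrow> finite_quandle Q \<Longrightarrow> equiv_to_FS tensor_rels indecomposable_gens (gen (X, Q))"
proof (induction "card (fst X) + card (fst Q)" arbitrary: X Q rule: less_induct)
  case less
  have fin: "finite (fst X)" "finite (fst Q)"
    using less.prems by (simp_all add: is_zset_def finite_quandle_def)
  consider (empty) "fst X = {} \<or> fst Q = {}" | (split_X) "fst X \<noteq> {}" "\<not> cyclic_zset X"
    | (split_Q) "fst Q \<noteq> {}" "\<not> connected_rack Q"
    | (indecomposable) "cyclic_zset X" "connected_rack Q"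
    by blast
  then show ?case
  proof cases
    case empty
    have "(\<lambda>p. gen (X, Q) p - gen (X, Q) p - gen (X, Q) p) \<in> tensor_rels"
    proof (cases "fst X = {}")
      case True
      then have "zset_decomp X {} (fst X)" and X: "({}, snd X) = X"
        by (auto simp: zset_decomp_def prod_eq_iff)
      from tensor_rel_zset_decomp[OF less.prems(1) this(1) less.prems(2)] show ?thesis
        unfolding X prod.collapse .
    next
      case False
      then have "rack_decomp Q {} (fst Q)" and Q: "({}, snd Q) = Q"
        using empty by (auto simp: rack_decomp_def is_subrack_def prod_eq_iff)
      from tensor_rel_quandle_decomp[OF less.prems this(1)] show ?thesis
        unfolding Q prod.collapse .
    qed
    then have "(\<lambda>p. (-1) * (gen (X, Q) p - gen (X, Q) p - gen (X, Q) p)) \<in> zspan tensor_rels"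
      by (intro zspan_smult zspan_base)
    then show ?thesis by (simp add: equiv_to_FS_zspan)
  next
    case split_X
    then obtain A where A: "A \<subset> fst X" "A \<noteq> {}" "zset_decomp X A (fst X - A)"
      using zset_split[OF less.prems(1)] by blast
    have "card A < card (fst X)" "card (fst X - A) < card (fst X)"
      using A(1,2) fin(1) by (auto intro: psubset_card_mono)
    then have "equiv_to_FS tensor_rels indecomposable_gens (gen ((A, snd X), Q))"
      "equiv_to_FS tensor_rels indecomposable_gens (gen ((fst X - A, snd X), Q))"
      using zset_decomp_parts[OF less.prems(1) A(3)] less.prems(2) by (auto intro!: less.hyps)
    then show ?thesis
      by (rule equiv_to_FS_split[OF
            zspan_base[OF tensor_rel_zset_decomp[OF less.prems(1) A(3) less.prems(2)]]])
  next
    case split_Q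
    then obtain A where A: "A \<subset> fst Q" "A \<noteq> {}" "rack_decomp Q A (fst Q - A)"
      using quandle_split[OF less.prems(2)] by blast
    have "card A < card (fst Q)" "card (fst Q - A) < card (fst Q)"
      using A(1,2) fin(2) by (auto intro: psubset_card_mono)
    moreover have "finite_quandle (A, snd Q)" "finite_quandle (fst Q - A, snd Q)"
      using A(3) finite_quandle_subrack[OF less.prems(2)] by (auto simp: rack_decomp_def)
    ultimately have "equiv_to_FS tensor_rels indecomposable_gens (gen (X, (A, snd Q)))"
      "equiv_to_FS tensor_rels indecomposable_gens (gen (X, (fst Q - A, snd Q)))"
      using less.prems(1) by (auto intro!: less.hyps)
    then show ?thesis
      by (rule equiv_to_FS_split[OF zspan_base[OF tensor_rel_quandle_decomp[OF less.prems A(3)]]])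
  next
    case indecomposable
    then show ?thesis using less.prems by (simp add: equiv_to_FS_gen indecomposable_gens_def)
  qed
qed

lemma FS_equiv_to_indecomposables:
  assumes "c \<in> FS tensor_gens"
  shows "equiv_to_FS tensor_rels indecomposable_gens c"
proof -
  have "finite (supp c)" "supp c \<subseteq> tensor_gens" using assms by (auto simp: FS_iff finsupp_def)
  then have "equiv_to_FS tensor_rels indecomposable_gens (\<lambda>p. \<Sum>x\<in>supp c. c x * gen x p)"
    by (intro equiv_to_FS_sum) (auto simp: tensor_gens_def gen_equiv_to_indecomposables)
  moreover have "(\<lambda>p. \<Sum>x\<in>supp c. c x * gen x p) = c"
    using assms by (simp add: fun_eq_iff finsupp_as_sum[symmetric] FS_iff)
  ultimately show ?thesis by simp
qed

lemma indecomposable_perm_product: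
  assumes "x \<in> indecomposable_gens"
  shows "finite_rack (perm_product x)" "connected_rack (perm_product x)"
proof -
  obtain X Q where x: "x = (X, Q)" by (cases x)
  have X: "cyclic_zset X" "is_zset X" and Q: "finite_quandle Q" "is_quandle Q" "connected_rack Q"
    using assms by (auto simp: x indecomposable_gens_def cyclic_zset_def finite_quandle_def)
  show "finite_rack (perm_product x)"
    unfolding x by (rule finite_rack_perm_product[OF X(2) finite_quandle_imp_finite_rack[OF Q(1)]])
  show "connected_rack (perm_product x)"
    unfolding x by (rule connected_perm_product[OF X(1) Q(3,2)])
qed

lemma iso_class_coefficients_vanish:
  assumes c: "c \<in> FS indecomposable_gens" and image: "linext perm_product c \<in> zspan rack_rels"
    and t: "t \<in> supp c"
    and largest: "\<And>x. x \<in> supp c \<Longrightarrow> card (fst (perm_product x)) \<le> card (fst (perm_product t))"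
  shows "(\<Sum>x\<in>{x \<in> supp c. rack_iso (perm_product t) (perm_product x)}. c x) = 0"
proof -
  let ?K = "perm_product t"
  have gens: "finsupp c" "supp c \<subseteq> indecomposable_gens" using c by (auto simp: FS_iff)
  have "t \<in> indecomposable_gens" using gens(2) t by blast
  then have K: "connected_rack ?K" "is_rack ?K"
    using indecomposable_perm_product by (auto simp: finite_rack_def)
  have "copies ?K (perm_product x) = (if rack_iso ?K (perm_product x) then 1 else 0)"
    if x: "x \<in> supp c" for x
  proof -
    have "finite_rack (perm_product x)" using indecomposable_perm_product(1) gens(2) x by blast
    then show ?thesis using copies_of_small[OF _ largest[OF x]] by (simp add: finite_rack_def)
  qed
  then have "weighted_sum (\<lambda>x. copies ?K (perm_product x)) c
      = (\<Sum>x\<in>supp c. if rack_iso ?K (perm_product x) then c x else 0)"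
    unfolding weighted_sum_def by (intro sum.cong) auto
  also have "\<dots> = (\<Sum>x\<in>{x \<in> supp c. rack_iso ?K (perm_product x)}. c x)"
    using gens(1) by (simp add: finsupp_def sum.inter_filter)
  finally show ?thesis
    using weighted_sum_copies_rack_rels[OF K image]
      weighted_sum_linext[OF gens(1), of "copies ?K" perm_product]
    by simp
qed

lemma iso_class_in_zspan:
  assumes c: "c \<in> FS indecomposable_gens" and t: "t \<in> supp c"
    and S: "S = {x \<in> supp c. rack_iso (perm_product t) (perm_product x)}"
    and sum: "(\<Sum>x\<in>S. c x) = 0"
  shows "(\<lambda>x. if x \<in> S then c x else 0) \<in> zspan tensor_rels"
proof -
  let ?h = "\<lambda>x. if x \<in> S then c x else 0"
  have gens: "finsupp c" "supp c \<subseteq> indecomposable_gens" using c by (auto simp: FS_iff)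
  have supp_h: "supp ?h = S" using S by (auto simp: supp_def)
  have fin: "finsupp ?h" using gens(1) supp_h S by (auto simp: finsupp_def)
  have "(\<lambda>y. gen x y - gen t y) \<in> zspan tensor_rels" if x: "x \<in> S" for x
  proof -
    obtain X Q Xt Qt where xt: "x = (X, Q)" "t = (Xt, Qt)" by (cases x, cases t)
    have "(X, Q) \<in> indecomposable_gens" "(Xt, Qt) \<in> indecomposable_gens"
      using x t gens(2) S xt by auto
    then have X: "cyclic_zset X" "finite_quandle Q" "fst Q \<noteq> {}"
      and Xt: "cyclic_zset Xt" "finite_quandle Qt" "fst Qt \<noteq> {}"
      by (auto simp: indecomposable_gens_def connected_rack_def)
    moreover have "rack_iso (perm_product (Xt, Qt)) (perm_product (X, Q))" using x S xt by simp
    ultimately have "zset_iso Xt X" "rack_iso Qt Q" using perm_product_cancel by blast+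
    then have "(\<lambda>y. gen (Xt, Qt) y - gen (X, Q) y) \<in> zspan tensor_rels"
      using X Xt by (intro tensor_gen_iso) (auto simp: cyclic_zset_def)
    from zspan_smult[OF this, of "-1"] show ?thesis by (simp add: xt)
  qed
  \<comment> \<open>the first extension is \<open>?h\<close> itself, the second is \<open>(\<Sum>x\<in>S. c x) * gen t = 0\<close>\<close>
  then have "(\<lambda>y. linext (\<lambda>x. x) ?h y - linext (\<lambda>_. t) ?h y) \<in> zspan tensor_rels"
    using supp_h by (intro linext_diff_in_zspan[OF fin]) auto
  then show ?thesis using sum supp_h by (simp add: linext_id linext_const)
qed

lemma injective_on_indecomposables:
  "c \<in> FS indecomposable_gens \<Longrightarrow> linext perm_product c \<in> zspan rack_rels \<Longrightarrow> c \<in> zspan tensor_rels"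
proof (induction "card (supp c)" arbitrary: c rule: less_induct)
  case less
  have fin: "finite (supp c)" using less.prems(1) by (auto simp: FS_iff finsupp_def)
  show ?case
  proof (cases "supp c = {}")
    case True
    then have "c = (\<lambda>_. 0)" by (auto simp: supp_def)
    then show ?thesis by (simp add: zspan.zero)
  next
    case False
    let ?size = "\<lambda>x. card (fst (perm_product x))"
    have "Max (?size ` supp c) \<in> ?size ` supp c" using fin False by (intro Max_in) auto
    then obtain t where t_max: "Max (?size ` supp c) = ?size t" and t: "t \<in> supp c" by (rule imageE)
    have largest: "?size x \<le> ?size t" if "x \<in> supp c" for x
      using Max_ge[of "?size ` supp c" "?size x"] t_max fin that by simp
    define S where "S = {x \<in> supp c. rack_iso (perm_product t) (perm_product x)}"
    define c1 where "c1 x = (if x \<in> S then c x else 0)" for x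
    define c2 where "c2 x = (if x \<in> S then 0 else c x)" for x
    have c_split: "c = (\<lambda>x. c1 x + c2 x)" by (auto simp: c1_def c2_def)
    have c1: "c1 \<in> zspan tensor_rels"
      using iso_class_in_zspan[OF less.prems(1) t S_def]
        iso_class_coefficients_vanish[OF less.prems t largest]
      by (simp add: S_def c1_def[abs_def])
    have supp_c2: "supp c2 = supp c - S" by (auto simp: supp_def c2_def)
    have fin12: "finsupp c1" "finsupp c2"
      using fin by (auto simp: finsupp_def supp_def c1_def c2_def intro: finite_subset)
    have "t \<in> S" using t rack_iso_refl by (simp add: S_def)
    then have "card (supp c2) < card (supp c)"
      unfolding supp_c2 using t fin by (intro psubset_card_mono) auto
    moreover have "c2 \<in> FS indecomposable_gens"
      using less.prems(1) supp_c2 fin12(2) by (auto simp: FS_iff)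
    moreover have
      "linext perm_product c2 = (\<lambda>y. linext perm_product c y - linext perm_product c1 y)"
      using fin12 by (simp add: c_split linext_add)
    then have "linext perm_product c2 \<in> zspan rack_rels"
      using zspan_diff[OF less.prems(2) burnside_map_respects_rels[OF c1]]
        by (simp add: burnside_map_eq)
    ultimately have "c2 \<in> zspan tensor_rels" by (rule less.hyps)
    from zspan_add[OF this c1] show ?thesis by (simp only: c_split[symmetric])
  qed
qed

lemma burnside_map_injective:
  assumes c: "c \<in> FS tensor_gens" and image: "burnside_map c \<in> zspan rack_rels"
  shows "c \<in> zspan tensor_rels"
proof -
  obtain d where d: "d \<in> FS indecomposable_gens" and cd: "(\<lambda>p. c p - d p) \<in> zspan tensor_rels"
    using FS_equiv_to_indecomposables[OF c] unfolding equiv_to_FS_def by blast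
  have fin: "finsupp c" "finsupp d" using c d by (auto simp: FS_iff)
  have "linext perm_product d
      = (\<lambda>y. linext perm_product c y - linext perm_product (\<lambda>p. c p - d p) y)"
    using fin by (simp add: linext_diff)
  also have "\<dots> \<in> zspan rack_rels"
    using zspan_diff[OF image burnside_map_respects_rels[OF cd]] by (simp add: burnside_map_eq)
  finally have "d \<in> zspan tensor_rels" by (rule injective_on_indecomposables[OF d])
  from zspan_add[OF this cd] show ?thesis by simp
qed

theorem corollary7p13:
  shows "(\<forall>c \<in> FS tensor_gens. c \<in> zspan tensor_rels \<longrightarrow> burnside_map c \<in> zspan rack_rels)
    \<and> (\<forall>c \<in> FS tensor_gens. \<forall>d \<in> FS tensor_gens.
         (\<lambda>x. burnside_map (conv tensor_mult c d) x
              - conv rack_prod (burnside_map c) (burnside_map d) x) \<in> zspan rack_rels)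
    \<and> (\<lambda>x. burnside_map (gen (zset_one, rack_one)) x - gen rack_one x) \<in> zspan rack_rels
    \<and> (\<forall>c \<in> FS tensor_gens. burnside_map c \<in> zspan rack_rels \<longrightarrow> c \<in> zspan tensor_rels)"
  using burnside_map_respects_rels burnside_map_mult burnside_map_one burnside_map_injective
    by blast

end
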